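(* Let $a,b,\beta\in\mathbb{C}$ and let $d=\{te^{i\alpha}:t\ge0\}$ be a ray with $\alpha\in(0,2\pi)$ (so $d\ne\mathbb{R}^+$). Consider the convolution equation $$F(p)=\frac{1}{1-p}\Big(p-\beta\int_0^pF(s)\,ds+a\,(F*F)(p)+b\,(F*F*F)(p)\Big),\qquad p\in d.$$ There is $\nu_0>0$ such that this equation has exactly one solution $F$ in $\bigcup_{\nu\ge\nu_0}L^1_\nu(d)$.
   Context: For $\nu>0$, $L^1_\nu(d)$ is the space of measurable functions $f$ on the ray $d=\{te^{i\alpha}:t\ge0\}$ with $\|f\|_\nu=\int_0^\infty|f(te^{i\alpha})|e^{-\nu t}\,dt<\infty$. Convolution is $(f*g)(p)=\int_0^pf(s)g(p-s)\,ds$, the integral taken along the segment from $0$ to $p$ in $d$. (This equation is the Borel transform of $f'+(1-\beta x^{-1})f=x^{-2}+af^2+bf^3$.) *)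

theory Defs
  imports "HOL-Analysis.Analysis"
begin

text \<open>A function on the ray d = {t e^{i alpha} : t \<ge> 0} is represented by its
  parametrisation F :: real \<Rightarrow> complex, F t standing for F(t e^{i alpha});
  values at t < 0 are irrelevant.\<close>

definition ray_point :: "real \<Rightarrow> real \<Rightarrow> complex" where
  "ray_point \<alpha> t = complex_of_real t * exp (\<i> * complex_of_real \<alpha>)"

definition L1nu :: "real \<Rightarrow> (real \<Rightarrow> complex) set" where
  "L1nu \<nu> = {f. set_borel_measurable lborel {0..} f \<and>
                 set_integrable lborel {0..} (\<lambda>t. norm (f t) * exp (- \<nu> * t))}"

text \<open>Integral along the segment from 0 to p = t e^{i alpha}: ds = e^{i alpha} du.\<close>
definition ray_int :: "real \<Rightarrow> (real \<Rightarrow> complex) \<Rightarrow> real \<Rightarrow> complex" where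
  "ray_int \<alpha> f t = exp (\<i> * complex_of_real \<alpha>) * (LINT u:{0..t}|lborel. f u)"

definition ray_conv :: "real \<Rightarrow> (real \<Rightarrow> complex) \<Rightarrow> (real \<Rightarrow> complex) \<Rightarrow> real \<Rightarrow> complex" where
  "ray_conv \<alpha> f g t = exp (\<i> * complex_of_real \<alpha>) * (LINT u:{0..t}|lborel. f u * g (t - u))"

text \<open>F solves the convolution equation (almost everywhere on the ray, i.e. as
  an element of L^1_nu).\<close>
definition solves_eq :: "complex \<Rightarrow> complex \<Rightarrow> complex \<Rightarrow> real \<Rightarrow> (real \<Rightarrow> complex) \<Rightarrow> bool" where
  "solves_eq a b \<beta> \<alpha> F \<longleftrightarrow>
     (AE t in lborel. t \<ge> 0 \<longrightarrow>
        F t = (1 / (1 - ray_point \<alpha> t)) *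
              (ray_point \<alpha> t - \<beta> * ray_int \<alpha> F t
               + a * ray_conv \<alpha> F F t
               + b * ray_conv \<alpha> (ray_conv \<alpha> F F) F t))"

end

theory Submission
  imports Defs
begin

text \<open>Write the equation as F = picard_op F. Uniqueness: the Laplace transform at \<mu> turns the
  convolutions into products, so the transform of |G - F| is bounded by itself times a factor built
  from the transforms of 1, |F| and |G|. That factor tends to 0 as \<mu> grows, which forces G = F
  almost everywhere.

  Existence: the weight w(t) = e^(\<nu> t) / (1 + t)^2 satisfies w * w \<le> 8 w and
  int_0^t w \<le> 2 w(t) / \<nu>. Hence, for \<nu> large, picard_op maps {f. |f| \<le> r w} into itself
  and halves the weighted sup distance there. The Picard iterates therefore converge pointwise
  to a fixed point, which lies in L^1_(\<nu>+1).

  Both halves use that 1/(1 - p) is bounded on d, since \<alpha> is not a multiple of 2 pi.\<close>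

section \<open>Laplace transforms of nonnegative functions\<close>

definition nn_conv :: "(real \<Rightarrow> ennreal) \<Rightarrow> (real \<Rightarrow> ennreal) \<Rightarrow> real \<Rightarrow> ennreal" where
  "nn_conv h g t = (\<integral>\<^sup>+u. indicator {0..t} u * h u * g (t - u) \<partial>lborel)"

definition laplace_nn :: "real \<Rightarrow> (real \<Rightarrow> ennreal) \<Rightarrow> ennreal" where
  "laplace_nn \<mu> h = (\<integral>\<^sup>+t. indicator {0..} t * h t * ennreal (exp (- \<mu> * t)) \<partial>lborel)"

abbreviation ennorm :: "(real \<Rightarrow> complex) \<Rightarrow> real \<Rightarrow> ennreal" where
  "ennorm f \<equiv> \<lambda>u. ennreal (norm (f u))"

lemma indicator_atLeastAtMost_split:
  "(indicator {0..t} u :: 'a :: semiring_1) = indicator {0..} u * indicator {0..} (t - u)"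
  for t u :: real
  by (auto simp: indicator_def)

lemma nn_conv_altdef:
  "nn_conv h g t = (\<integral>\<^sup>+u. indicator {0..} u * h u * (indicator {0..} (t - u) * g (t - u)) \<partial>lborel)"
  unfolding nn_conv_def by (simp add: indicator_atLeastAtMost_split mult_ac)

lemma borel_measurable_nn_conv [measurable]:
  assumes [measurable]: "h \<in> borel_measurable borel" "g \<in> borel_measurable borel"
  shows "nn_conv h g \<in> borel_measurable borel"
proof -
  have "(\<lambda>t. \<integral>\<^sup>+u. indicator {0..} u * h u * (indicator {0..} (t - u) * g (t - u)) \<partial>lborel)
      \<in> borel_measurable borel"
    by measurable
  then show ?thesis by (simp add: nn_conv_altdef[abs_def])
qed

lemma nn_conv_mono_AE:
  assumes "AE u in lborel. 0 \<le> u \<longrightarrow> h u \<le> h' u"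
  shows "nn_conv h g t \<le> nn_conv h' g t"
  unfolding nn_conv_def
  by (rule nn_integral_mono_AE)
    (use assms in \<open>eventually_elim, auto simp: indicator_def intro!: mult_right_mono\<close>)

lemma laplace_nn_shift:
  assumes [measurable]: "g \<in> borel_measurable borel"
  shows "(\<integral>\<^sup>+t. indicator {0..} (t - u) * g (t - u) * ennreal (exp (- \<mu> * t)) \<partial>lborel)
       = ennreal (exp (- \<mu> * u)) * laplace_nn \<mu> g"
proof -
  have "(\<integral>\<^sup>+t. indicator {0..} (t - u) * g (t - u) * ennreal (exp (- \<mu> * t)) \<partial>lborel)
      = (\<integral>\<^sup>+v. indicator {0..} ((u + 1 * v) - u) * g ((u + 1 * v) - u)
                * ennreal (exp (- \<mu> * (u + 1 * v))) \<partial>lborel)"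
    by (subst nn_integral_real_affine[where c=1 and t=u]) auto
  also have "\<dots> = (\<integral>\<^sup>+v. ennreal (exp (- \<mu> * u)) * (indicator {0..} v * g v * ennreal (exp (- \<mu> * v))) \<partial>lborel)"
  proof (intro nn_integral_cong)
    fix v :: real
    have "exp (- \<mu> * (u + 1 * v)) = exp (- \<mu> * u) * exp (- \<mu> * v)"
      by (simp add: algebra_simps flip: exp_add)
    then show "indicator {0..} ((u + 1 * v) - u) * g ((u + 1 * v) - u) * ennreal (exp (- \<mu> * (u + 1 * v)))
       = ennreal (exp (- \<mu> * u)) * (indicator {0..} v * g v * ennreal (exp (- \<mu> * v)))"
      by (simp add: ennreal_mult mult_ac)
  qed
  also have "\<dots> = ennreal (exp (- \<mu> * u)) * laplace_nn \<mu> g"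
    unfolding laplace_nn_def by (subst nn_integral_cmult) auto
  finally show ?thesis .
qed

lemma laplace_nn_nn_conv:
  assumes [measurable]: "h \<in> borel_measurable borel" "g \<in> borel_measurable borel"
  shows "laplace_nn \<mu> (nn_conv h g) = laplace_nn \<mu> h * laplace_nn \<mu> g"
proof -
  let ?k = "\<lambda>u t. indicator {0..} u * h u * (indicator {0..} (t - u) * g (t - u) * ennreal (exp (- \<mu> * t)))"
  have "laplace_nn \<mu> (nn_conv h g) = (\<integral>\<^sup>+t. (\<integral>\<^sup>+u. ?k u t \<partial>lborel) \<partial>lborel)"
    unfolding laplace_nn_def nn_conv_altdef
  proof (intro nn_integral_cong)
    fix t :: real
    have "indicator {0..} t * (\<integral>\<^sup>+u. indicator {0..} u * h u * (indicator {0..} (t - u) * g (t - u)) \<partial>lborel)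
          * ennreal (exp (- \<mu> * t))
        = (\<integral>\<^sup>+u. indicator {0..} t * (indicator {0..} u * h u * (indicator {0..} (t - u) * g (t - u)))
          * ennreal (exp (- \<mu> * t)) \<partial>lborel)"
      by (simp add: nn_integral_cmult nn_integral_multc)
    also have "\<dots> = (\<integral>\<^sup>+u. ?k u t \<partial>lborel)"
      by (intro nn_integral_cong) (auto simp: indicator_def mult.assoc)
    finally show "indicator {0..} t * (\<integral>\<^sup>+u. indicator {0..} u * h u * (indicator {0..} (t - u) * g (t - u)) \<partial>lborel)
          * ennreal (exp (- \<mu> * t)) = (\<integral>\<^sup>+u. ?k u t \<partial>lborel)" .
  qed
  also have "\<dots> = (\<integral>\<^sup>+u. (\<integral>\<^sup>+t. ?k u t \<partial>lborel) \<partial>lborel)"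
    by (rule lborel_pair.Fubini') measurable
  also have "\<dots> = (\<integral>\<^sup>+u. indicator {0..} u * h u * ennreal (exp (- \<mu> * u)) * laplace_nn \<mu> g \<partial>lborel)"
  proof (intro nn_integral_cong)
    fix u :: real
    have "(\<integral>\<^sup>+t. ?k u t \<partial>lborel) = indicator {0..} u * h u
        * (\<integral>\<^sup>+t. indicator {0..} (t - u) * g (t - u) * ennreal (exp (- \<mu> * t)) \<partial>lborel)"
      by (subst nn_integral_cmult[symmetric]) (auto simp: mult.assoc)
    also have "\<dots> = indicator {0..} u * h u * ennreal (exp (- \<mu> * u)) * laplace_nn \<mu> g"
      by (subst laplace_nn_shift) (simp_all add: mult.assoc)
    finally show "(\<integral>\<^sup>+t. ?k u t \<partial>lborel) = indicator {0..} u * h u * ennreal (exp (- \<mu> * u)) * laplace_nn \<mu> g" .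
  qed
  also have "\<dots> = laplace_nn \<mu> h * laplace_nn \<mu> g"
    unfolding laplace_nn_def by (simp add: nn_integral_multc)
  finally show ?thesis .
qed

lemma laplace_nn_antimono:
  assumes "\<nu> \<le> \<mu>"
  shows "laplace_nn \<mu> h \<le> laplace_nn \<nu> h"
  unfolding laplace_nn_def
proof (intro nn_integral_mono)
  fix t :: real
  show "indicator {0..} t * h t * ennreal (exp (- \<mu> * t)) \<le> indicator {0..} t * h t * ennreal (exp (- \<nu> * t))"
  proof (cases "0 \<le> t")
    case True
    then have "exp (- \<mu> * t) \<le> exp (- \<nu> * t)" using assms by (simp add: mult_right_mono)
    then show ?thesis by (intro mult_left_mono ennreal_leI) auto
  qed (simp add: indicator_def)
qed

lemma laplace_nn_mono_AE:
  assumes "AE t in lborel. 0 \<le> t \<longrightarrow> h t \<le> g t"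
  shows "laplace_nn \<mu> h \<le> laplace_nn \<mu> g"
  unfolding laplace_nn_def
  by (intro nn_integral_mono_AE)
    (use assms in \<open>eventually_elim, auto simp: indicator_def intro!: mult_right_mono\<close>)

lemma laplace_nn_add:
  assumes [measurable]: "h \<in> borel_measurable borel" "g \<in> borel_measurable borel"
  shows "laplace_nn \<mu> (\<lambda>t. h t + g t) = laplace_nn \<mu> h + laplace_nn \<mu> g"
  unfolding laplace_nn_def
  by (subst nn_integral_add[symmetric]) (auto intro!: nn_integral_cong simp: distrib_left distrib_right)

lemma laplace_nn_cmult:
  assumes [measurable]: "h \<in> borel_measurable borel"
  shows "laplace_nn \<mu> (\<lambda>t. c * h t) = c * laplace_nn \<mu> h"
  unfolding laplace_nn_def
  by (subst nn_integral_cmult[symmetric]) (auto intro!: nn_integral_cong simp: mult_ac)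

lemma laplace_nn_const_one:
  assumes "0 < \<mu>"
  shows "laplace_nn \<mu> (\<lambda>_. 1) = ennreal (1 / \<mu>)"
proof -
  have "laplace_nn \<mu> (\<lambda>_. 1) = (\<integral>\<^sup>+t. ennreal (exp (- \<mu> * t)) * indicator {0..} t \<partial>lborel)"
    unfolding laplace_nn_def by (simp add: mult_ac)
  also have "\<dots> = ennreal (exp (- \<mu> * 0) / \<mu>)"
    by (rule nn_integral_has_integral_lebesgue')
      (use has_integral_exp_minus_to_infinity[OF assms, of 0] in auto)
  finally show ?thesis by simp
qed

lemma AE_finite_if_laplace_nn_finite:
  assumes [measurable]: "h \<in> borel_measurable borel" and "laplace_nn \<mu> h < \<infinity>"
  shows "AE t in lborel. 0 \<le> t \<longrightarrow> h t < \<infinity>"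
proof -
  have "AE t in lborel. indicator {0..} t * h t * ennreal (exp (- \<mu> * t)) \<noteq> \<infinity>"
    using assms unfolding laplace_nn_def by (intro nn_integral_PInf_AE) auto
  then show ?thesis
    by eventually_elim (auto simp: indicator_def ennreal_mult_eq_top_iff top.not_eq_extremum)
qed

lemma AE_nn_conv_finite:
  assumes [measurable]: "h \<in> borel_measurable borel" "g \<in> borel_measurable borel"
    and "laplace_nn \<mu> h < \<infinity>" "laplace_nn \<mu> g < \<infinity>"
  shows "AE t in lborel. 0 \<le> t \<longrightarrow> nn_conv h g t < \<infinity>"
  by (rule AE_finite_if_laplace_nn_finite[of _ \<mu>])
    (use assms in \<open>auto simp: laplace_nn_nn_conv ennreal_mult_less_top\<close>)

lemma laplace_nn_tendsto_0:
  assumes [measurable]: "h \<in> borel_measurable borel" and "laplace_nn \<nu> h < \<infinity>"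
  shows "(\<lambda>n. laplace_nn (\<nu> + real n) h) \<longlonglongrightarrow> 0"
proof -
  let ?u = "\<lambda>n t. indicator {0..} t * h t * ennreal (exp (- (\<nu> + real n) * t))"
  have "(\<lambda>n. \<integral>\<^sup>+t. ?u n t \<partial>lborel) \<longlonglongrightarrow> (\<integral>\<^sup>+(t::real). 0 \<partial>lborel)"
  proof (rule nn_integral_dominated_convergence[where w="\<lambda>t. indicator {0..} t * h t * ennreal (exp (- \<nu> * t))"])
    show "(\<integral>\<^sup>+t. indicator {0..} t * h t * ennreal (exp (- \<nu> * t)) \<partial>lborel) < \<infinity>"
      using assms(2) unfolding laplace_nn_def .
    show "AE t in lborel. ?u j t \<le> indicator {0..} t * h t * ennreal (exp (- \<nu> * t))" for j
    proof (intro AE_I2)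
      fix t :: real
      show "?u j t \<le> indicator {0..} t * h t * ennreal (exp (- \<nu> * t))"
      proof (cases "0 \<le> t")
        case True
        then have "exp (- (\<nu> + real j) * t) \<le> exp (- \<nu> * t)" by (simp add: algebra_simps)
        then show ?thesis by (intro mult_left_mono ennreal_leI) auto
      qed (simp add: indicator_def)
    qed
    show "AE t in lborel. (\<lambda>n. ?u n t) \<longlonglongrightarrow> 0"
      using AE_lborel_singleton[of 0] AE_finite_if_laplace_nn_finite[OF assms]
    proof eventually_elim
      case (elim t)
      show ?case
      proof (cases "0 < t")
        case True
        have "exp (- (\<nu> + real n) * t) = exp (- \<nu> * t) * exp (- t) ^ n" for n
          by (simp add: algebra_simps flip: exp_of_nat_mult exp_add)
        moreover have "(\<lambda>n. exp (- \<nu> * t) * exp (- t) ^ n) \<longlonglongrightarrow> 0"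
          using True by (intro tendsto_mult_right_zero LIMSEQ_power_zero) auto
        ultimately have "(\<lambda>n. ennreal (exp (- (\<nu> + real n) * t))) \<longlonglongrightarrow> ennreal 0"
          by (intro tendsto_ennrealI) simp
        then have "(\<lambda>n. ?u n t) \<longlonglongrightarrow> indicator {0..} t * h t * ennreal 0"
          using elim True by (intro tendsto_mult_ennreal) (auto simp: indicator_def ennreal_mult_eq_top_iff)
        then show ?thesis by simp
      qed (use elim in \<open>simp add: indicator_def\<close>)
    qed
  qed measurable
  then show ?thesis unfolding laplace_nn_def by simp
qed

lemma norm_set_integral_le_nn_integral:
  fixes f :: "real \<Rightarrow> complex"
  shows "ennreal (norm (LINT x:A|lborel. f x)) \<le> (\<integral>\<^sup>+x. indicator A x * ennreal (norm (f x)) \<partial>lborel)"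
proof (cases "set_integrable lborel A f")
  case True
  then have "ennreal (norm (LINT x:A|lborel. f x)) \<le> (\<integral>\<^sup>+x. ennreal (norm (indicator A x *\<^sub>R f x)) \<partial>lborel)"
    unfolding set_integrable_def set_lebesgue_integral_def by (rule integral_norm_bound_ennreal)
  also have "\<dots> = (\<integral>\<^sup>+x. indicator A x * ennreal (norm (f x)) \<partial>lborel)"
    by (intro nn_integral_cong) (auto simp: indicator_def)
  finally show ?thesis .
next
  case False
  then show ?thesis
    unfolding set_integrable_def set_lebesgue_integral_def by (simp add: not_integrable_integral_eq)
qed

lemma set_integrable_if_nn_integral_finite:
  fixes f :: "real \<Rightarrow> complex"
  assumes [measurable]: "f \<in> borel_measurable borel" "A \<in> sets borel"
    and "(\<integral>\<^sup>+x. indicator A x * ennreal (norm (f x)) \<partial>lborel) < \<infinity>"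
  shows "set_integrable lborel A f"
  unfolding set_integrable_def
proof (rule integrableI_bounded)
  have "(\<integral>\<^sup>+x. ennreal (norm (indicator A x *\<^sub>R f x)) \<partial>lborel)
      = (\<integral>\<^sup>+x. indicator A x * ennreal (norm (f x)) \<partial>lborel)"
    by (intro nn_integral_cong) (auto simp: indicator_def)
  then show "(\<integral>\<^sup>+x. ennreal (norm (indicator A x *\<^sub>R f x)) \<partial>lborel) < \<infinity>"
    using assms(3) by simp
qed measurable

lemma norm_set_integral_diff_le_nn_integral:
  fixes f g :: "real \<Rightarrow> complex"
  assumes [measurable]: "f \<in> borel_measurable borel" "g \<in> borel_measurable borel" "A \<in> sets borel"
    and "(\<integral>\<^sup>+x. indicator A x * ennreal (norm (f x)) \<partial>lborel) < \<infinity>"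
    and "(\<integral>\<^sup>+x. indicator A x * ennreal (norm (g x)) \<partial>lborel) < \<infinity>"
  shows "ennreal (norm ((LINT x:A|lborel. f x) - (LINT x:A|lborel. g x)))
     \<le> (\<integral>\<^sup>+x. indicator A x * ennreal (norm (f x - g x)) \<partial>lborel)"
proof -
  have "set_integrable lborel A f" "set_integrable lborel A g"
    using set_integrable_if_nn_integral_finite assms by auto
  then have "(LINT x:A|lborel. f x) - (LINT x:A|lborel. g x) = (LINT x:A|lborel. f x - g x)"
    by (simp add: set_integral_diff)
  then show ?thesis using norm_set_integral_le_nn_integral[of A "\<lambda>x. f x - g x"] by simp
qed

lemma borel_measurable_ray_int [measurable]:
  assumes [measurable]: "f \<in> borel_measurable borel"
  shows "ray_int \<alpha> f \<in> borel_measurable borel"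
proof -
  have "(\<lambda>t. exp (\<i> * complex_of_real \<alpha>)
      * (\<integral>u. (indicator {0..} u * indicator {0..} (t - u)) *\<^sub>R f u \<partial>lborel)) \<in> borel_measurable borel"
    by measurable
  then show ?thesis
    unfolding ray_int_def[abs_def] set_lebesgue_integral_def indicator_atLeastAtMost_split .
qed

lemma borel_measurable_ray_conv [measurable]:
  assumes [measurable]: "f \<in> borel_measurable borel" "g \<in> borel_measurable borel"
  shows "ray_conv \<alpha> f g \<in> borel_measurable borel"
proof -
  have "(\<lambda>t. exp (\<i> * complex_of_real \<alpha>)
      * (\<integral>u. (indicator {0..} u * indicator {0..} (t - u)) *\<^sub>R (f u * g (t - u)) \<partial>lborel))
      \<in> borel_measurable borel"
    by measurable
  then show ?thesis
    unfolding ray_conv_def[abs_def] set_lebesgue_integral_def indicator_atLeastAtMost_split .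
qed

lemma borel_measurable_ray_point [measurable]: "ray_point \<alpha> \<in> borel_measurable borel"
  unfolding ray_point_def[abs_def] by measurable

lemma norm_ray_point: "norm (ray_point \<alpha> t) = \<bar>t\<bar>"
  unfolding ray_point_def by (simp add: norm_mult)

lemma cos_less_one:
  assumes "0 < \<alpha>" "\<alpha> < 2 * pi"
  shows "cos \<alpha> < 1"
proof -
  have "cos \<alpha> \<noteq> 1"
  proof
    assume "cos \<alpha> = 1"
    then obtain n :: int where n: "\<alpha> = n * 2 * pi" by (auto simp: cos_one_2pi_int)
    then have "0 < real_of_int n" "real_of_int n < 1" using assms pi_gt_zero
      by (auto simp: zero_less_mult_iff mult_less_cancel_right2)
    then show False by simp
  qed
  then show ?thesis using cos_le_one[of \<alpha>] by linarith
qed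

lemma norm_one_minus_ray_point_squared:
  "(norm (1 - ray_point \<alpha> t))^2 = 1 - 2 * t * cos \<alpha> + t^2"
proof -
  have "(norm (1 - ray_point \<alpha> t))^2 = (1 - t * cos \<alpha>)^2 + (t * sin \<alpha>)^2"
    unfolding ray_point_def cmod_power2 by (simp add: Re_exp Im_exp)
  also have "\<dots> = 1 - 2 * t * cos \<alpha> + t^2"
    by (simp add: power2_diff power_mult_distrib sin_squared_eq algebra_simps)
  finally show ?thesis .
qed

lemma resolvent_bounded_on_ray:
  assumes "0 < \<alpha>" "\<alpha> < 2 * pi"
  shows "\<exists>K. \<forall>t\<ge>0. norm (1 / (1 - ray_point \<alpha> t)) \<le> K"
proof -
  define c where "c = cos \<alpha>"
  have c: "c < 1" "-1 \<le> c" unfolding c_def using cos_less_one[OF assms] by auto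
  define m where "m = sqrt ((1 - c) / 2)"
  have m0: "0 < m" unfolding m_def using c by simp
  have dist: "m \<le> norm (1 - ray_point \<alpha> t)" if t: "0 \<le> t" for t
  proof -
    have "1 - 2 * t * c + t^2 - (1 - c) / 2 = (1 + c) / 2 * (1 - t)^2 + (1 - c) * (t + t^2 / 2)"
      by (simp add: power2_eq_square field_simps)
    also have "\<dots> \<ge> 0" using c t by (intro add_nonneg_nonneg mult_nonneg_nonneg) auto
    finally have "m^2 \<le> (norm (1 - ray_point \<alpha> t))^2"
      unfolding norm_one_minus_ray_point_squared m_def c_def using c by simp
    then show ?thesis using m0 by (simp add: power2_le_iff_abs_le abs_le_iff)
  qed
  have "norm (1 / (1 - ray_point \<alpha> t)) \<le> 1 / m" if "0 \<le> t" for t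
    using dist[OF that] m0 by (simp add: norm_divide frac_le)
  then show ?thesis by blast
qed

lemma norm_ray_int_le: "ennreal (norm (ray_int \<alpha> f t)) \<le> nn_conv (ennorm f) (\<lambda>_. 1) t"
  unfolding ray_int_def nn_conv_def using norm_set_integral_le_nn_integral[of "{0..t}" f]
  by (simp add: norm_mult)

lemma norm_ray_conv_le: "ennreal (norm (ray_conv \<alpha> f g t)) \<le> nn_conv (ennorm f) (ennorm g) t"
  unfolding ray_conv_def nn_conv_def using norm_set_integral_le_nn_integral[of "{0..t}" "\<lambda>u. f u * g (t - u)"]
  by (simp add: norm_mult ennreal_mult mult.assoc)

lemma norm_ray_int_diff_le:
  assumes [measurable]: "f \<in> borel_measurable borel" "g \<in> borel_measurable borel"
    and "nn_conv (ennorm f) (\<lambda>_. 1) t < \<infinity>" "nn_conv (ennorm g) (\<lambda>_. 1) t < \<infinity>"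
  shows "ennreal (norm (ray_int \<alpha> f t - ray_int \<alpha> g t)) \<le> nn_conv (ennorm (\<lambda>u. f u - g u)) (\<lambda>_. 1) t"
proof -
  have "ennreal (norm (ray_int \<alpha> f t - ray_int \<alpha> g t))
      = ennreal (norm ((LINT u:{0..t}|lborel. f u) - (LINT u:{0..t}|lborel. g u)))"
    unfolding ray_int_def by (simp add: norm_mult flip: right_diff_distrib)
  also have "\<dots> \<le> nn_conv (ennorm (\<lambda>u. f u - g u)) (\<lambda>_. 1) t"
    using norm_set_integral_diff_le_nn_integral[of f g "{0..t}"] assms unfolding nn_conv_def by simp
  finally show ?thesis .
qed

lemma norm_ray_conv_diff_le:
  assumes [measurable]: "f \<in> borel_measurable borel" "g \<in> borel_measurable borel"
    "f' \<in> borel_measurable borel" "g' \<in> borel_measurable borel"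
    and "nn_conv (ennorm f) (ennorm g) t < \<infinity>" "nn_conv (ennorm f') (ennorm g') t < \<infinity>"
  shows "ennreal (norm (ray_conv \<alpha> f g t - ray_conv \<alpha> f' g' t))
     \<le> nn_conv (ennorm (\<lambda>u. f u - f' u)) (ennorm g) t + nn_conv (ennorm f') (ennorm (\<lambda>u. g u - g' u)) t"
proof -
  have "ennreal (norm (ray_conv \<alpha> f g t - ray_conv \<alpha> f' g' t))
      = ennreal (norm ((LINT u:{0..t}|lborel. f u * g (t - u)) - (LINT u:{0..t}|lborel. f' u * g' (t - u))))"
    unfolding ray_conv_def by (simp add: norm_mult flip: right_diff_distrib)
  also have "\<dots> \<le> (\<integral>\<^sup>+u. indicator {0..t} u * ennreal (norm (f u * g (t - u) - f' u * g' (t - u))) \<partial>lborel)"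
    using assms(5,6)
    by (intro norm_set_integral_diff_le_nn_integral) (auto simp: nn_conv_def norm_mult ennreal_mult mult.assoc)
  also have "\<dots> \<le> (\<integral>\<^sup>+u. indicator {0..t} u * ennorm (\<lambda>u. f u - f' u) u * ennorm g (t - u)
                   + indicator {0..t} u * ennorm f' u * ennorm (\<lambda>u. g u - g' u) (t - u) \<partial>lborel)"
  proof (intro nn_integral_mono)
    fix u
    have "f u * g (t - u) - f' u * g' (t - u) = (f u - f' u) * g (t - u) + f' u * (g (t - u) - g' (t - u))"
      by (simp add: algebra_simps)
    then have "norm (f u * g (t - u) - f' u * g' (t - u))
        \<le> norm (f u - f' u) * norm (g (t - u)) + norm (f' u) * norm (g (t - u) - g' (t - u))"
      by (metis norm_mult norm_triangle_ineq)
    then have "ennreal (norm (f u * g (t - u) - f' u * g' (t - u)))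
        \<le> ennorm (\<lambda>u. f u - f' u) u * ennorm g (t - u) + ennorm f' u * ennorm (\<lambda>u. g u - g' u) (t - u)"
      by (simp add: ennreal_leI flip: ennreal_plus ennreal_mult)
    then show "indicator {0..t} u * ennreal (norm (f u * g (t - u) - f' u * g' (t - u)))
        \<le> indicator {0..t} u * ennorm (\<lambda>u. f u - f' u) u * ennorm g (t - u)
          + indicator {0..t} u * ennorm f' u * ennorm (\<lambda>u. g u - g' u) (t - u)"
      by (auto simp: indicator_def)
  qed
  also have "\<dots> = nn_conv (ennorm (\<lambda>u. f u - f' u)) (ennorm g) t + nn_conv (ennorm f') (ennorm (\<lambda>u. g u - g' u)) t"
    unfolding nn_conv_def by (rule nn_integral_add) measurable
  finally show ?thesis .
qed

lemma norm_ray_conv3_diff_le: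
  assumes [measurable]: "f \<in> borel_measurable borel" "g \<in> borel_measurable borel"
    and "nn_conv (nn_conv (ennorm f) (ennorm f)) (ennorm f) t < \<infinity>"
      "nn_conv (nn_conv (ennorm g) (ennorm g)) (ennorm g) t < \<infinity>"
    and "AE u in lborel. 0 \<le> u \<longrightarrow> nn_conv (ennorm f) (ennorm f) u < \<infinity>"
      "AE u in lborel. 0 \<le> u \<longrightarrow> nn_conv (ennorm g) (ennorm g) u < \<infinity>"
  defines "h \<equiv> \<lambda>u. g u - f u"
  shows "ennreal (norm (ray_conv \<alpha> (ray_conv \<alpha> g g) g t - ray_conv \<alpha> (ray_conv \<alpha> f f) f t))
    \<le> nn_conv (\<lambda>u. nn_conv (ennorm h) (ennorm g) u + nn_conv (ennorm f) (ennorm h) u) (ennorm g) t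
       + nn_conv (nn_conv (ennorm f) (ennorm f)) (ennorm h) t"
proof -
  have "nn_conv (ennorm (ray_conv \<alpha> f f)) (ennorm f) t < \<infinity>"
    using nn_conv_mono_AE[of "ennorm (ray_conv \<alpha> f f)" "nn_conv (ennorm f) (ennorm f)" "ennorm f" t]
      norm_ray_conv_le assms(3) by (auto dest: le_less_trans)
  moreover have "nn_conv (ennorm (ray_conv \<alpha> g g)) (ennorm g) t < \<infinity>"
    using nn_conv_mono_AE[of "ennorm (ray_conv \<alpha> g g)" "nn_conv (ennorm g) (ennorm g)" "ennorm g" t]
      norm_ray_conv_le assms(4) by (auto dest: le_less_trans)
  ultimately have "ennreal (norm (ray_conv \<alpha> (ray_conv \<alpha> g g) g t - ray_conv \<alpha> (ray_conv \<alpha> f f) f t))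
      \<le> nn_conv (ennorm (\<lambda>u. ray_conv \<alpha> g g u - ray_conv \<alpha> f f u)) (ennorm g) t
        + nn_conv (ennorm (ray_conv \<alpha> f f)) (ennorm h) t"
    unfolding h_def by (intro norm_ray_conv_diff_le) measurable
  also have "\<dots> \<le> nn_conv (\<lambda>u. nn_conv (ennorm h) (ennorm g) u + nn_conv (ennorm f) (ennorm h) u) (ennorm g) t
       + nn_conv (nn_conv (ennorm f) (ennorm f)) (ennorm h) t"
  proof (intro add_mono nn_conv_mono_AE)
    show "AE u in lborel. 0 \<le> u \<longrightarrow> ennorm (\<lambda>u. ray_conv \<alpha> g g u - ray_conv \<alpha> f f u) u
        \<le> nn_conv (ennorm h) (ennorm g) u + nn_conv (ennorm f) (ennorm h) u"
      using assms(5,6) by eventually_elim (auto simp: h_def intro: norm_ray_conv_diff_le)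
    show "AE u in lborel. 0 \<le> u \<longrightarrow> ennorm (ray_conv \<alpha> f f) u \<le> nn_conv (ennorm f) (ennorm f) u"
      using norm_ray_conv_le by auto
  qed
  finally show ?thesis .
qed


section \<open>Uniqueness\<close>

definition picard_op ::
  "complex \<Rightarrow> complex \<Rightarrow> complex \<Rightarrow> real \<Rightarrow> (real \<Rightarrow> complex) \<Rightarrow> real \<Rightarrow> complex" where
  "picard_op a b \<beta> \<alpha> f t = (if 0 \<le> t then 1 / (1 - ray_point \<alpha> t) *
       (ray_point \<alpha> t - \<beta> * ray_int \<alpha> f t + a * ray_conv \<alpha> f f t + b * ray_conv \<alpha> (ray_conv \<alpha> f f) f t)
     else 0)"

lemma borel_measurable_picard_op [measurable]:
  assumes [measurable]: "f \<in> borel_measurable borel"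
  shows "picard_op a b \<beta> \<alpha> f \<in> borel_measurable borel"
  unfolding picard_op_def[abs_def] by measurable

lemma solves_eq_iff_picard_op:
  "solves_eq a b \<beta> \<alpha> f \<longleftrightarrow> (AE t in lborel. 0 \<le> t \<longrightarrow> f t = picard_op a b \<beta> \<alpha> f t)"
  unfolding solves_eq_def picard_op_def by simp

lemma norm_picard_op_le:
  assumes "0 \<le> t" "norm (1 / (1 - ray_point \<alpha> t)) \<le> K"
  shows "norm (picard_op a b \<beta> \<alpha> f t) \<le> K * (t + norm \<beta> * norm (ray_int \<alpha> f t)
    + norm a * norm (ray_conv \<alpha> f f t) + norm b * norm (ray_conv \<alpha> (ray_conv \<alpha> f f) f t))"
proof -
  have "norm (picard_op a b \<beta> \<alpha> f t) = norm (1 / (1 - ray_point \<alpha> t))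
      * norm (ray_point \<alpha> t - \<beta> * ray_int \<alpha> f t + a * ray_conv \<alpha> f f t + b * ray_conv \<alpha> (ray_conv \<alpha> f f) f t)"
    unfolding picard_op_def using assms(1) by (simp only: if_True norm_mult)
  also have "\<dots> \<le> K * (t + norm \<beta> * norm (ray_int \<alpha> f t)
      + norm a * norm (ray_conv \<alpha> f f t) + norm b * norm (ray_conv \<alpha> (ray_conv \<alpha> f f) f t))"
  proof (intro mult_mono assms(2))
    show "norm (ray_point \<alpha> t - \<beta> * ray_int \<alpha> f t + a * ray_conv \<alpha> f f t + b * ray_conv \<alpha> (ray_conv \<alpha> f f) f t)
      \<le> t + norm \<beta> * norm (ray_int \<alpha> f t) + norm a * norm (ray_conv \<alpha> f f t)
        + norm b * norm (ray_conv \<alpha> (ray_conv \<alpha> f f) f t)"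
      using assms(1)
      by (intro order_trans[OF norm_triangle_ineq] add_mono order_trans[OF norm_triangle_ineq4])
        (auto simp: norm_mult norm_ray_point)
  qed (use assms in \<open>auto intro: order_trans[OF norm_ge_zero]\<close>)
  finally show ?thesis .
qed

lemma norm_picard_op_diff_le:
  assumes "0 \<le> t" "norm (1 / (1 - ray_point \<alpha> t)) \<le> K"
  shows "norm (picard_op a b \<beta> \<alpha> f t - picard_op a b \<beta> \<alpha> g t)
    \<le> K * (norm \<beta> * norm (ray_int \<alpha> f t - ray_int \<alpha> g t) + norm a * norm (ray_conv \<alpha> f f t - ray_conv \<alpha> g g t)
           + norm b * norm (ray_conv \<alpha> (ray_conv \<alpha> f f) f t - ray_conv \<alpha> (ray_conv \<alpha> g g) g t))"
proof -
  define dI where "dI = ray_int \<alpha> f t - ray_int \<alpha> g t"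
  define dC where "dC = ray_conv \<alpha> f f t - ray_conv \<alpha> g g t"
  define dT where "dT = ray_conv \<alpha> (ray_conv \<alpha> f f) f t - ray_conv \<alpha> (ray_conv \<alpha> g g) g t"
  have "picard_op a b \<beta> \<alpha> f t - picard_op a b \<beta> \<alpha> g t = 1 / (1 - ray_point \<alpha> t) * (- \<beta> * dI + a * dC + b * dT)"
    using assms(1) unfolding picard_op_def dI_def dC_def dT_def by (simp add: algebra_simps)
  then have "norm (picard_op a b \<beta> \<alpha> f t - picard_op a b \<beta> \<alpha> g t)
      = norm (1 / (1 - ray_point \<alpha> t)) * norm (- \<beta> * dI + a * dC + b * dT)"
    by (simp only: norm_mult)
  also have "\<dots> \<le> K * (norm \<beta> * norm dI + norm a * norm dC + norm b * norm dT)"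
  proof (intro mult_mono assms(2))
    show "norm (- \<beta> * dI + a * dC + b * dT) \<le> norm \<beta> * norm dI + norm a * norm dC + norm b * norm dT"
      by (intro order_trans[OF norm_triangle_ineq] add_mono) (auto simp: norm_mult)
  qed (use assms in \<open>auto intro: order_trans[OF norm_ge_zero]\<close>)
  finally show ?thesis unfolding dI_def dC_def dT_def .
qed

text \<open>A majorant of |picard_op g - picard_op f| / |1/(1 - p)| in terms of |f|, |g| and h = |g - f|,
  obtained from g*g*g - f*f*f = ((g - f)*g + f*(g - f))*g + (f*f)*(g - f).\<close>

definition diff_majorant :: "complex \<Rightarrow> complex \<Rightarrow> complex \<Rightarrow>
    (real \<Rightarrow> ennreal) \<Rightarrow> (real \<Rightarrow> ennreal) \<Rightarrow> (real \<Rightarrow> ennreal) \<Rightarrow> real \<Rightarrow> ennreal" where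
  "diff_majorant a b \<beta> f g h t =
     ennreal (norm \<beta>) * nn_conv h (\<lambda>_. 1) t
     + ennreal (norm a) * (nn_conv h g t + nn_conv f h t)
     + ennreal (norm b) * (nn_conv (\<lambda>u. nn_conv h g u + nn_conv f h u) g t + nn_conv (nn_conv f f) h t)"

lemma borel_measurable_diff_majorant [measurable]:
  assumes [measurable]: "f \<in> borel_measurable borel" "g \<in> borel_measurable borel" "h \<in> borel_measurable borel"
  shows "diff_majorant a b \<beta> f g h \<in> borel_measurable borel"
  unfolding diff_majorant_def[abs_def] by measurable

lemma laplace_nn_diff_majorant:
  assumes [measurable]: "f \<in> borel_measurable borel" "g \<in> borel_measurable borel" "h \<in> borel_measurable borel"
  shows "laplace_nn \<mu> (diff_majorant a b \<beta> f g h)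
    = (ennreal (norm \<beta>) * laplace_nn \<mu> (\<lambda>_. 1)
       + ennreal (norm a) * (laplace_nn \<mu> g + laplace_nn \<mu> f)
       + ennreal (norm b) * ((laplace_nn \<mu> g + laplace_nn \<mu> f) * laplace_nn \<mu> g
                             + laplace_nn \<mu> f * laplace_nn \<mu> f)) * laplace_nn \<mu> h"
  unfolding diff_majorant_def
  apply (subst laplace_nn_add, measurable)+
  apply (subst laplace_nn_cmult, measurable)+
  apply (subst laplace_nn_add, measurable)+
  apply (subst laplace_nn_nn_conv, measurable)+
  apply (subst laplace_nn_add, measurable)+
  apply (subst laplace_nn_nn_conv, measurable)+
  apply (simp add: algebra_simps)
  done

lemma AE_norm_picard_op_diff_le:
  assumes [measurable]: "f \<in> borel_measurable borel" "g \<in> borel_measurable borel"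
    and "0 < \<mu>" "laplace_nn \<mu> (ennorm f) < \<infinity>" "laplace_nn \<mu> (ennorm g) < \<infinity>"
    and K: "\<And>t. 0 \<le> t \<Longrightarrow> norm (1 / (1 - ray_point \<alpha> t)) \<le> K"
  shows "AE t in lborel. 0 \<le> t \<longrightarrow>
    ennreal (norm (picard_op a b \<beta> \<alpha> g t - picard_op a b \<beta> \<alpha> f t))
      \<le> ennreal K * diff_majorant a b \<beta> (ennorm f) (ennorm g) (ennorm (\<lambda>t. g t - f t)) t"
proof -
  have K0: "0 \<le> K" using K[of 0] by (simp add: ray_point_def)
  have one: "laplace_nn \<mu> (\<lambda>_. 1) < \<infinity>" using laplace_nn_const_one[OF \<open>0 < \<mu>\<close>] by simp
  have mf: "ennorm f \<in> borel_measurable borel" and mg: "ennorm g \<in> borel_measurable borel"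
    by measurable
  have ff: "laplace_nn \<mu> (nn_conv (ennorm f) (ennorm f)) < \<infinity>"
    and gg: "laplace_nn \<mu> (nn_conv (ennorm g) (ennorm g)) < \<infinity>"
    using assms by (simp_all add: laplace_nn_nn_conv mf mg ennreal_mult_less_top)
  have fin: "AE t in lborel. 0 \<le> t \<longrightarrow> nn_conv (ennorm f) (\<lambda>_. 1) t < \<infinity>"
    "AE t in lborel. 0 \<le> t \<longrightarrow> nn_conv (ennorm g) (\<lambda>_. 1) t < \<infinity>"
    "AE t in lborel. 0 \<le> t \<longrightarrow> nn_conv (ennorm f) (ennorm f) t < \<infinity>"
    "AE t in lborel. 0 \<le> t \<longrightarrow> nn_conv (ennorm g) (ennorm g) t < \<infinity>"
    "AE t in lborel. 0 \<le> t \<longrightarrow> nn_conv (nn_conv (ennorm f) (ennorm f)) (ennorm f) t < \<infinity>"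
    "AE t in lborel. 0 \<le> t \<longrightarrow> nn_conv (nn_conv (ennorm g) (ennorm g)) (ennorm g) t < \<infinity>"
    by (rule AE_nn_conv_finite[of _ _ \<mu>]; use assms(4,5) one ff gg in \<open>simp add: mf mg\<close>)+
  then show ?thesis
  proof eventually_elim
    case (elim t)
    show ?case
    proof
      assume t: "0 \<le> t"
      define dI where "dI = ray_int \<alpha> g t - ray_int \<alpha> f t"
      define dC where "dC = ray_conv \<alpha> g g t - ray_conv \<alpha> f f t"
      define dT where "dT = ray_conv \<alpha> (ray_conv \<alpha> g g) g t - ray_conv \<alpha> (ray_conv \<alpha> f f) f t"
      have "norm (picard_op a b \<beta> \<alpha> g t - picard_op a b \<beta> \<alpha> f t)
          \<le> K * (norm \<beta> * norm dI + norm a * norm dC + norm b * norm dT)"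
        unfolding dI_def dC_def dT_def by (rule norm_picard_op_diff_le[OF t K[OF t]])
      then have "ennreal (norm (picard_op a b \<beta> \<alpha> g t - picard_op a b \<beta> \<alpha> f t))
          \<le> ennreal K * (ennreal (norm \<beta>) * ennreal (norm dI) + ennreal (norm a) * ennreal (norm dC)
                          + ennreal (norm b) * ennreal (norm dT))"
        using K0 by (simp add: ennreal_leI flip: ennreal_mult ennreal_plus)
      also have "\<dots> \<le> ennreal K * diff_majorant a b \<beta> (ennorm f) (ennorm g) (ennorm (\<lambda>t. g t - f t)) t"
        unfolding diff_majorant_def dI_def dC_def dT_def using elim t fin(3,4)
        by (intro mult_left_mono add_mono order_refl norm_ray_int_diff_le norm_ray_conv_diff_le
            norm_ray_conv3_diff_le) auto
      finally show "ennreal (norm (picard_op a b \<beta> \<alpha> g t - picard_op a b \<beta> \<alpha> f t))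
          \<le> ennreal K * diff_majorant a b \<beta> (ennorm f) (ennorm g) (ennorm (\<lambda>t. g t - f t)) t" .
    qed
  qed
qed

lemma ennreal_eq_0_if_le_mult:
  fixes x c :: ennreal
  assumes "x \<le> c * x" "c < 1" "x < \<infinity>"
  shows "x = 0"
proof -
  obtain r s where rs: "x = ennreal r" "c = ennreal s" "0 \<le> r" "0 \<le> s" "s < 1"
    using assms(2,3) by (cases x; cases c) (auto simp: ennreal_less_iff)
  then have "r \<le> s * r" using assms(1) by (simp add: ennreal_le_iff flip: ennreal_mult)
  then show ?thesis using rs by (simp add: mult_le_cancel_right1)
qed

lemma solutions_unique:
  assumes [measurable]: "f \<in> borel_measurable borel" "g \<in> borel_measurable borel"
    and "0 < \<nu>" and f_fin: "laplace_nn \<nu> (ennorm f) < \<infinity>" and g_fin: "laplace_nn \<nu> (ennorm g) < \<infinity>"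
    and K: "\<And>t. 0 \<le> t \<Longrightarrow> norm (1 / (1 - ray_point \<alpha> t)) \<le> K"
    and "solves_eq a b \<beta> \<alpha> f" "solves_eq a b \<beta> \<alpha> g"
  shows "AE t in lborel. 0 \<le> t \<longrightarrow> g t = f t"
proof -
  define c where "c \<mu> = ennreal K * (ennreal (norm \<beta>) * laplace_nn \<mu> (\<lambda>_. 1)
       + ennreal (norm a) * (laplace_nn \<mu> (ennorm g) + laplace_nn \<mu> (ennorm f))
       + ennreal (norm b) * ((laplace_nn \<mu> (ennorm g) + laplace_nn \<mu> (ennorm f)) * laplace_nn \<mu> (ennorm g)
                             + laplace_nn \<mu> (ennorm f) * laplace_nn \<mu> (ennorm f)))" for \<mu>
  have one: "laplace_nn \<nu> (\<lambda>_. 1) < \<infinity>" using laplace_nn_const_one[OF \<open>0 < \<nu>\<close>] by simp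
  have "(\<lambda>n. c (\<nu> + real n)) \<longlonglongrightarrow> ennreal K * (ennreal (norm \<beta>) * 0 + ennreal (norm a) * (0 + 0)
      + ennreal (norm b) * ((0 + 0) * 0 + 0 * 0))"
    unfolding c_def using f_fin g_fin one
    by (intro tendsto_intros laplace_nn_tendsto_0) auto
  then have "\<forall>\<^sub>F n in sequentially. c (\<nu> + real n) < 1"
    by (intro order_tendstoD(2)) auto
  then obtain n where c_less_1: "c (\<nu> + real n) < 1" by (auto simp: eventually_sequentially)
  define \<mu> where "\<mu> = \<nu> + real n"
  have "0 < \<mu>" using \<open>0 < \<nu>\<close> by (simp add: \<mu>_def add_pos_nonneg)
  have f_fin': "laplace_nn \<mu> (ennorm f) < \<infinity>" and g_fin': "laplace_nn \<mu> (ennorm g) < \<infinity>"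
    using le_less_trans[OF laplace_nn_antimono f_fin] le_less_trans[OF laplace_nn_antimono g_fin]
    by (auto simp: \<mu>_def)
  let ?h = "ennorm (\<lambda>t. g t - f t)"
  have "laplace_nn \<mu> ?h \<le> laplace_nn \<mu> (\<lambda>t. ennorm g t + ennorm f t)"
    by (rule laplace_nn_mono_AE) (simp add: norm_triangle_ineq4 flip: ennreal_plus)
  then have h_fin: "laplace_nn \<mu> ?h < \<infinity>"
    using f_fin' g_fin' by (simp add: laplace_nn_add le_less_trans)
  have "AE t in lborel. 0 \<le> t \<longrightarrow> ennreal (norm (picard_op a b \<beta> \<alpha> g t - picard_op a b \<beta> \<alpha> f t))
      \<le> ennreal K * diff_majorant a b \<beta> (ennorm f) (ennorm g) ?h t"
    using \<open>0 < \<mu>\<close> f_fin' g_fin' K by (intro AE_norm_picard_op_diff_le) auto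
  moreover note assms(7,8)[unfolded solves_eq_iff_picard_op]
  ultimately have "AE t in lborel. 0 \<le> t \<longrightarrow> ?h t \<le> ennreal K * diff_majorant a b \<beta> (ennorm f) (ennorm g) ?h t"
    by eventually_elim auto
  then have "laplace_nn \<mu> ?h \<le> laplace_nn \<mu> (\<lambda>t. ennreal K * diff_majorant a b \<beta> (ennorm f) (ennorm g) ?h t)"
    by (rule laplace_nn_mono_AE)
  also have "\<dots> = c \<mu> * laplace_nn \<mu> ?h"
    unfolding c_def
    by (subst laplace_nn_cmult, measurable, subst laplace_nn_diff_majorant, measurable) (simp add: mult.assoc)
  finally have "laplace_nn \<mu> ?h = 0"
    using c_less_1 h_fin by (intro ennreal_eq_0_if_le_mult) (auto simp: \<mu>_def)
  then have "AE t in lborel. indicator {0..} t * ?h t * ennreal (exp (- \<mu> * t)) = 0"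
    unfolding laplace_nn_def by (subst (asm) nn_integral_0_iff_AE) auto
  then show ?thesis by eventually_elim (auto simp: indicator_def)
qed

section \<open>A weight that is almost reproduced by convolution\<close>

definition weight :: "real \<Rightarrow> real \<Rightarrow> real" where
  "weight \<nu> t = exp (\<nu> * t) / (1 + t)^2"

lemma weight_pos: "0 \<le> t \<Longrightarrow> 0 < weight \<nu> t"
  unfolding weight_def by (simp add: add_nonneg_pos)

lemma borel_measurable_weight [measurable]: "weight \<nu> \<in> borel_measurable borel"
  unfolding weight_def[abs_def] by measurable

lemma nn_integral_eq_if_has_real_derivative:
  fixes f f' :: "real \<Rightarrow> real"
  assumes "0 \<le> t"
    and "\<And>x. x \<in> {0..t} \<Longrightarrow> (f has_real_derivative f' x) (at x within {0..t})"
    and "\<And>x. x \<in> {0..t} \<Longrightarrow> 0 \<le> f' x"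
  shows "(\<integral>\<^sup>+x. ennreal (f' x) * indicator {0..t} x \<partial>lborel) = ennreal (f t - f 0)"
proof (rule nn_integral_has_integral_lebesgue')
  show "(f' has_integral f t - f 0) {0..t}"
    using assms by (intro fundamental_theorem_of_calculus)
      (auto simp: has_real_derivative_iff_has_vector_derivative)
qed (use assms(3) in auto)

lemma weight_has_real_derivative:
  assumes "0 \<le> x"
  shows "(weight \<nu> has_real_derivative exp (\<nu> * x) * (\<nu> * (1 + x) - 2) / (1 + x)^3) (at x within S)"
proof -
  have x: "1 + x \<noteq> 0" using assms by simp
  have "(weight \<nu> has_real_derivative
      (exp (\<nu> * x) * \<nu> * (1 + x)^2 - exp (\<nu> * x) * (2 * (1 + x))) / ((1 + x)^2 * (1 + x)^2)) (at x within S)"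
    unfolding weight_def[abs_def] using x by (auto intro!: derivative_eq_intros)
  moreover have "exp (\<nu> * x) * \<nu> * (1 + x)^2 - exp (\<nu> * x) * (2 * (1 + x))
      = exp (\<nu> * x) * (\<nu> * (1 + x) - 2) * (1 + x)"
    by (simp add: algebra_simps power2_eq_square)
  moreover have "(1 + x)^2 * (1 + x)^2 = (1 + x)^3 * (1 + x)"
    by (simp add: power2_eq_square power3_eq_cube)
  ultimately show ?thesis using x by simp
qed

lemma nn_integral_weight_le:
  assumes "4 \<le> \<nu>" "0 \<le> t"
  shows "(\<integral>\<^sup>+u. indicator {0..t} u * ennreal (weight \<nu> u) \<partial>lborel) \<le> ennreal (2 * weight \<nu> t / \<nu>)"
proof -
  define W' where "W' x = 2 / \<nu> * (exp (\<nu> * x) * (\<nu> * (1 + x) - 2) / (1 + x)^3)" for x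
  have le: "weight \<nu> x \<le> W' x" if "0 \<le> x" for x
  proof -
    have "(1 + x) * \<nu> \<le> 2 * (\<nu> * (1 + x) - 2)" using assms that
      by (simp add: algebra_simps) (smt (verit) mult_nonneg_nonneg)
    then have "1 + x \<le> 2 / \<nu> * (\<nu> * (1 + x) - 2)" using assms by (simp add: field_simps)
    then have "exp (\<nu> * x) * (1 + x) / (1 + x)^3 \<le> exp (\<nu> * x) * (2 / \<nu> * (\<nu> * (1 + x) - 2)) / (1 + x)^3"
      using that by (intro divide_right_mono mult_left_mono) auto
    moreover have "weight \<nu> x = exp (\<nu> * x) * (1 + x) / (1 + x)^3"
      unfolding weight_def using that by (simp add: power2_eq_square power3_eq_cube)
    ultimately have "weight \<nu> x \<le> exp (\<nu> * x) * (2 / \<nu> * (\<nu> * (1 + x) - 2)) / (1 + x)^3"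
      by simp
    then show ?thesis unfolding W'_def by (simp add: field_simps)
  qed
  have "(\<integral>\<^sup>+u. indicator {0..t} u * ennreal (weight \<nu> u) \<partial>lborel)
      \<le> (\<integral>\<^sup>+u. ennreal (W' u) * indicator {0..t} u \<partial>lborel)"
    by (intro nn_integral_mono) (auto simp: indicator_def le ennreal_leI)
  also have "\<dots> = ennreal (2 / \<nu> * weight \<nu> t - 2 / \<nu> * weight \<nu> 0)"
  proof (rule nn_integral_eq_if_has_real_derivative[OF assms(2)])
    fix x assume x: "x \<in> {0..t}"
    show "((\<lambda>u. 2 / \<nu> * weight \<nu> u) has_real_derivative W' x) (at x within {0..t})"
      unfolding W'_def using x by (intro DERIV_cmult weight_has_real_derivative) auto
    show "0 \<le> W' x" using le[of x] weight_pos[of x \<nu>] x by auto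
  qed
  also have "\<dots> \<le> ennreal (2 * weight \<nu> t / \<nu>)"
    using assms by (intro ennreal_leI) (simp add: weight_def mult.commute)
  finally show ?thesis .
qed

lemma nn_integral_inverse_square_le:
  assumes "0 \<le> t"
  shows "(\<integral>\<^sup>+u. ennreal (1 / (1 + u)^2) * indicator {0..t} u \<partial>lborel) \<le> 1"
proof -
  have "(\<integral>\<^sup>+u. ennreal (1 / (1 + u)^2) * indicator {0..t} u \<partial>lborel) = ennreal (- 1 / (1 + t) - - 1 / (1 + 0))"
  proof (rule nn_integral_eq_if_has_real_derivative[OF assms])
    fix x assume "x \<in> {0..t}"
    then show "((\<lambda>u. - 1 / (1 + u)) has_real_derivative 1 / (1 + x)^2) (at x within {0..t})"
      by (auto intro!: derivative_eq_intros simp: power2_eq_square field_simps)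
  qed simp
  also have "\<dots> \<le> 1" using assms by simp
  finally show ?thesis .
qed

lemma nn_integral_reflected_inverse_square_le:
  assumes "0 \<le> t"
  shows "(\<integral>\<^sup>+u. ennreal (1 / (1 + t - u)^2) * indicator {0..t} u \<partial>lborel) \<le> 1"
proof -
  have "(\<integral>\<^sup>+u. ennreal (1 / (1 + t - u)^2) * indicator {0..t} u \<partial>lborel) = ennreal (1 / (1 + t - t) - 1 / (1 + t - 0))"
  proof (rule nn_integral_eq_if_has_real_derivative[OF assms])
    fix x assume "x \<in> {0..t}"
    then show "((\<lambda>u. 1 / (1 + t - u)) has_real_derivative 1 / (1 + t - x)^2) (at x within {0..t})"
      by (auto intro!: derivative_eq_intros simp: power2_eq_square field_simps)
  qed simp
  also have "\<dots> \<le> 1" using assms by simp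
  finally show ?thesis .
qed

lemma weight_mult_le:
  assumes "0 \<le> u" "u \<le> t"
  shows "weight \<nu> u * weight \<nu> (t - u) \<le> 4 * weight \<nu> t * (1 / (1 + u)^2 + 1 / (1 + t - u)^2)"
proof -
  define A where "A = 1 + u"
  define B where "B = 1 + t - u"
  have A: "0 < A" and B: "0 < B" and AB: "1 + t \<le> A + B" using assms by (auto simp: A_def B_def)
  have "(1 + t)^2 \<le> (A + B)^2" using AB assms by (intro power_mono) auto
  also have "\<dots> \<le> 2 * (A^2 + B^2)"
    using zero_le_square[of "A - B"] by (simp add: power2_eq_square algebra_simps)
  also have "\<dots> \<le> 4 * (A^2 + B^2)" by simp
  finally have key: "1 / (A^2 * B^2) \<le> 4 / (1 + t)^2 * (1 / A^2 + 1 / B^2)"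
    using A B assms by (simp add: field_simps)
  have "exp (\<nu> * u) * exp (\<nu> * (t - u)) = exp (\<nu> * t)" by (simp flip: exp_add add: algebra_simps)
  then have "weight \<nu> u * weight \<nu> (t - u) = exp (\<nu> * t) * (1 / (A^2 * B^2))"
    unfolding weight_def A_def B_def by (simp add: field_simps)
  also have "\<dots> \<le> exp (\<nu> * t) * (4 / (1 + t)^2 * (1 / A^2 + 1 / B^2))"
    using key by (intro mult_left_mono) auto
  also have "\<dots> = 4 * weight \<nu> t * (1 / (1 + u)^2 + 1 / (1 + t - u)^2)"
    unfolding weight_def A_def B_def by simp
  finally show ?thesis .
qed

lemma nn_integral_weight_conv_le:
  assumes "0 \<le> t"
  shows "(\<integral>\<^sup>+u. indicator {0..t} u * ennreal (weight \<nu> u * weight \<nu> (t - u)) \<partial>lborel)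
    \<le> ennreal (8 * weight \<nu> t)"
proof -
  define c where "c = ennreal (4 * weight \<nu> t)"
  have "(\<integral>\<^sup>+u. indicator {0..t} u * ennreal (weight \<nu> u * weight \<nu> (t - u)) \<partial>lborel)
     \<le> (\<integral>\<^sup>+u. c * (ennreal (1 / (1 + u)^2) * indicator {0..t} u)
          + c * (ennreal (1 / (1 + t - u)^2) * indicator {0..t} u) \<partial>lborel)"
  proof (intro nn_integral_mono)
    fix u
    show "indicator {0..t} u * ennreal (weight \<nu> u * weight \<nu> (t - u))
      \<le> c * (ennreal (1 / (1 + u)^2) * indicator {0..t} u) + c * (ennreal (1 / (1 + t - u)^2) * indicator {0..t} u)"
    proof (cases "u \<in> {0..t}")
      case True
      then have "ennreal (weight \<nu> u * weight \<nu> (t - u))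
          \<le> ennreal (4 * weight \<nu> t * (1 / (1 + u)^2 + 1 / (1 + t - u)^2))"
        by (intro ennreal_leI weight_mult_le) auto
      also have "\<dots> = c * ennreal (1 / (1 + u)^2) + c * ennreal (1 / (1 + t - u)^2)"
        using weight_pos[OF assms, of \<nu>] unfolding c_def
        by (simp only: distrib_left ennreal_plus mult_nonneg_nonneg ennreal_mult zero_le_divide_1_iff
            zero_le_power2 order.strict_implies_order zero_le_numeral)
      finally show ?thesis using True by simp
    qed simp
  qed
  also have "\<dots> = c * (\<integral>\<^sup>+u. ennreal (1 / (1 + u)^2) * indicator {0..t} u \<partial>lborel)
          + c * (\<integral>\<^sup>+u. ennreal (1 / (1 + t - u)^2) * indicator {0..t} u \<partial>lborel)"
    by (subst nn_integral_add) (auto simp: nn_integral_cmult)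
  also have "\<dots> \<le> c * 1 + c * 1"
    using assms by (intro add_mono mult_left_mono nn_integral_inverse_square_le
        nn_integral_reflected_inverse_square_le) auto
  also have "\<dots> = ennreal (8 * weight \<nu> t)"
    using weight_pos[OF assms, of \<nu>] by (simp add: c_def flip: ennreal_plus)
  finally show ?thesis .
qed

definition weight_bounded :: "real \<Rightarrow> (real \<Rightarrow> complex) \<Rightarrow> real \<Rightarrow> bool" where
  "weight_bounded \<nu> f r \<longleftrightarrow> (\<forall>t\<ge>0. norm (f t) \<le> r * weight \<nu> t)"

lemma weight_bounded_nonneg: "weight_bounded \<nu> f r \<Longrightarrow> 0 \<le> r"
  unfolding weight_bounded_def using weight_pos[of 0 \<nu>]
  by (metis norm_ge_zero order_trans zero_le_mult_iff order.refl not_le)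

lemma nn_conv_one_le_weight:
  assumes "weight_bounded \<nu> f r" "4 \<le> \<nu>" "0 \<le> t"
  shows "nn_conv (ennorm f) (\<lambda>_. 1) t \<le> ennreal (r * (2 * weight \<nu> t / \<nu>))"
proof -
  have r: "0 \<le> r" using weight_bounded_nonneg[OF assms(1)] .
  have "nn_conv (ennorm f) (\<lambda>_. 1) t \<le> (\<integral>\<^sup>+u. ennreal r * (indicator {0..t} u * ennreal (weight \<nu> u)) \<partial>lborel)"
    unfolding nn_conv_def
  proof (intro nn_integral_mono)
    fix u
    show "indicator {0..t} u * ennorm f u * 1 \<le> ennreal r * (indicator {0..t} u * ennreal (weight \<nu> u))"
    proof (cases "u \<in> {0..t}")
      case True
      then have "ennreal (norm (f u)) \<le> ennreal (r * weight \<nu> u)"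
        using assms(1) unfolding weight_bounded_def by (intro ennreal_leI) auto
      then show ?thesis using r weight_pos[of u \<nu>] True by (simp add: ennreal_mult)
    qed simp
  qed
  also have "\<dots> = ennreal r * (\<integral>\<^sup>+u. indicator {0..t} u * ennreal (weight \<nu> u) \<partial>lborel)"
    by (rule nn_integral_cmult) measurable
  also have "\<dots> \<le> ennreal r * ennreal (2 * weight \<nu> t / \<nu>)"
    by (intro mult_left_mono nn_integral_weight_le assms) auto
  also have "\<dots> = ennreal (r * (2 * weight \<nu> t / \<nu>))"
    using r weight_pos[OF assms(3), of \<nu>] assms(2) by (subst ennreal_mult[symmetric]) auto
  finally show ?thesis .
qed

lemma nn_conv_le_weight:
  assumes "weight_bounded \<nu> f r" "weight_bounded \<nu> g s" "0 \<le> t"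
  shows "nn_conv (ennorm f) (ennorm g) t \<le> ennreal (r * s * (8 * weight \<nu> t))"
proof -
  have r: "0 \<le> r" "0 \<le> s" using weight_bounded_nonneg assms by auto
  have "nn_conv (ennorm f) (ennorm g) t
      \<le> (\<integral>\<^sup>+u. ennreal (r * s) * (indicator {0..t} u * ennreal (weight \<nu> u * weight \<nu> (t - u))) \<partial>lborel)"
    unfolding nn_conv_def
  proof (intro nn_integral_mono)
    fix u
    show "indicator {0..t} u * ennorm f u * ennorm g (t - u)
      \<le> ennreal (r * s) * (indicator {0..t} u * ennreal (weight \<nu> u * weight \<nu> (t - u)))"
    proof (cases "u \<in> {0..t}")
      case True
      then have "norm (f u) * norm (g (t - u)) \<le> (r * weight \<nu> u) * (s * weight \<nu> (t - u))"
        using assms r weight_pos[of u \<nu>] unfolding weight_bounded_def by (intro mult_mono) auto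
      then have "ennreal (norm (f u) * norm (g (t - u))) \<le> ennreal (r * s * (weight \<nu> u * weight \<nu> (t - u)))"
        by (intro ennreal_leI) (simp add: mult_ac)
      then show ?thesis using True r weight_pos[of u \<nu>] weight_pos[of "t - u" \<nu>]
        by (simp add: ennreal_mult[symmetric])
    qed simp
  qed
  also have "\<dots> = ennreal (r * s) * (\<integral>\<^sup>+u. indicator {0..t} u * ennreal (weight \<nu> u * weight \<nu> (t - u)) \<partial>lborel)"
    by (rule nn_integral_cmult) measurable
  also have "\<dots> \<le> ennreal (r * s) * ennreal (8 * weight \<nu> t)"
    by (intro mult_left_mono nn_integral_weight_conv_le assms) auto
  also have "\<dots> = ennreal (r * s * (8 * weight \<nu> t))"
    using r weight_pos[OF assms(3), of \<nu>] by (simp add: ennreal_mult)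
  finally show ?thesis .
qed

lemma norm_ray_int_le_weight:
  assumes "weight_bounded \<nu> f r" "4 \<le> \<nu>" "0 \<le> t"
  shows "norm (ray_int \<alpha> f t) \<le> r * (2 * weight \<nu> t / \<nu>)"
proof (rule ennreal_le_iff[THEN iffD1])
  show "0 \<le> r * (2 * weight \<nu> t / \<nu>)"
    using weight_bounded_nonneg[OF assms(1)] weight_pos[OF assms(3), of \<nu>] assms(2) by simp
  show "ennreal (norm (ray_int \<alpha> f t)) \<le> ennreal (r * (2 * weight \<nu> t / \<nu>))"
    by (rule order_trans[OF norm_ray_int_le nn_conv_one_le_weight[OF assms]])
qed

lemma norm_ray_conv_le_weight:
  assumes "weight_bounded \<nu> f r" "weight_bounded \<nu> g s" "0 \<le> t"
  shows "norm (ray_conv \<alpha> f g t) \<le> r * s * (8 * weight \<nu> t)"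
proof (rule ennreal_le_iff[THEN iffD1])
  show "0 \<le> r * s * (8 * weight \<nu> t)"
    using weight_bounded_nonneg[OF assms(1)] weight_bounded_nonneg[OF assms(2)] weight_pos[OF assms(3), of \<nu>]
    by simp
  show "ennreal (norm (ray_conv \<alpha> f g t)) \<le> ennreal (r * s * (8 * weight \<nu> t))"
    by (rule order_trans[OF norm_ray_conv_le nn_conv_le_weight[OF assms]])
qed

lemma weight_bounded_ray_conv:
  assumes "weight_bounded \<nu> f r" "weight_bounded \<nu> g s"
  shows "weight_bounded \<nu> (ray_conv \<alpha> f g) (r * s * 8)"
  using norm_ray_conv_le_weight[OF assms] unfolding weight_bounded_def by (simp add: mult_ac)

lemma norm_ray_int_diff_le_weight:
  assumes [measurable]: "f \<in> borel_measurable borel" "g \<in> borel_measurable borel"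
    and "weight_bounded \<nu> f r" "weight_bounded \<nu> g r" "weight_bounded \<nu> (\<lambda>t. f t - g t) d"
    and "4 \<le> \<nu>" "0 \<le> t"
  shows "norm (ray_int \<alpha> f t - ray_int \<alpha> g t) \<le> d * (2 * weight \<nu> t / \<nu>)"
proof (rule ennreal_le_iff[THEN iffD1])
  show "0 \<le> d * (2 * weight \<nu> t / \<nu>)"
    using weight_bounded_nonneg[OF assms(5)] weight_pos[OF assms(7), of \<nu>] assms(6) by simp
  have "ennreal (norm (ray_int \<alpha> f t - ray_int \<alpha> g t)) \<le> nn_conv (ennorm (\<lambda>u. f u - g u)) (\<lambda>_. 1) t"
    using le_less_trans[OF nn_conv_one_le_weight[OF assms(3,6,7)] ennreal_less_top]
      le_less_trans[OF nn_conv_one_le_weight[OF assms(4,6,7)] ennreal_less_top]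
    by (intro norm_ray_int_diff_le) auto
  also have "\<dots> \<le> ennreal (d * (2 * weight \<nu> t / \<nu>))" by (rule nn_conv_one_le_weight[OF assms(5,6,7)])
  finally show "ennreal (norm (ray_int \<alpha> f t - ray_int \<alpha> g t)) \<le> ennreal (d * (2 * weight \<nu> t / \<nu>))" .
qed

lemma norm_ray_conv_diff_le_weight:
  assumes [measurable]: "f \<in> borel_measurable borel" "g \<in> borel_measurable borel"
     "f' \<in> borel_measurable borel" "g' \<in> borel_measurable borel"
    and b: "weight_bounded \<nu> f r" "weight_bounded \<nu> g s" "weight_bounded \<nu> f' r'" "weight_bounded \<nu> g' s'"
      "weight_bounded \<nu> (\<lambda>t. f t - f' t) d1" "weight_bounded \<nu> (\<lambda>t. g t - g' t) d2"
    and t: "0 \<le> t"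
  shows "norm (ray_conv \<alpha> f g t - ray_conv \<alpha> f' g' t) \<le> (d1 * s + r' * d2) * (8 * weight \<nu> t)"
proof (rule ennreal_le_iff[THEN iffD1])
  have nonneg: "0 \<le> s" "0 \<le> r'" "0 \<le> d1" "0 \<le> d2" "0 < weight \<nu> t"
    using weight_bounded_nonneg[OF b(2)] weight_bounded_nonneg[OF b(3)] weight_bounded_nonneg[OF b(5)]
      weight_bounded_nonneg[OF b(6)] weight_pos[OF t] by auto
  then show "0 \<le> (d1 * s + r' * d2) * (8 * weight \<nu> t)" by simp
  have "ennreal (norm (ray_conv \<alpha> f g t - ray_conv \<alpha> f' g' t))
      \<le> nn_conv (ennorm (\<lambda>u. f u - f' u)) (ennorm g) t + nn_conv (ennorm f') (ennorm (\<lambda>u. g u - g' u)) t"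
    using le_less_trans[OF nn_conv_le_weight[OF b(1,2) t] ennreal_less_top]
      le_less_trans[OF nn_conv_le_weight[OF b(3,4) t] ennreal_less_top]
    by (intro norm_ray_conv_diff_le) auto
  also have "\<dots> \<le> ennreal (d1 * s * (8 * weight \<nu> t)) + ennreal (r' * d2 * (8 * weight \<nu> t))"
    by (intro add_mono nn_conv_le_weight b t)
  also have "\<dots> = ennreal ((d1 * s + r' * d2) * (8 * weight \<nu> t))"
    using nonneg by (simp add: algebra_simps flip: ennreal_plus)
  finally show "ennreal (norm (ray_conv \<alpha> f g t - ray_conv \<alpha> f' g' t))
      \<le> ennreal ((d1 * s + r' * d2) * (8 * weight \<nu> t))" .
qed

section \<open>Existence by Picard iteration\<close>

text \<open>The smallness conditions make picard_op map the weighted ball of radius r into itself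
  and halve weighted distances on it.\<close>

locale picard_setting =
  fixes a b \<beta> :: complex and \<alpha> K \<nu> r :: real
  assumes resolvent_bound: "\<And>t. 0 \<le> t \<Longrightarrow> norm (1 / (1 - ray_point \<alpha> t)) \<le> K"
    and nu_ge_4: "4 \<le> \<nu>"
    and forcing_le: "\<And>t. 0 \<le> t \<Longrightarrow> K * t \<le> r / 2 * weight \<nu> t"
    and linear_small: "K * norm \<beta> * (2 / \<nu>) \<le> 1/4"
    and nonlinear_small: "K * (16 * norm a * r + 192 * norm b * r^2) \<le> 1/4"
    and r_pos: "0 < r"
begin

lemma K_nonneg: "0 \<le> K"
  using resolvent_bound[of 0] by (simp add: ray_point_def)

lemma picard_op_weight_bounded:
  assumes "weight_bounded \<nu> f r"
  shows "weight_bounded \<nu> (picard_op a b \<beta> \<alpha> f) r"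
  unfolding weight_bounded_def
proof (intro allI impI)
  fix t :: real assume t: "0 \<le> t"
  have wt: "0 < weight \<nu> t" using weight_pos[OF t] .
  have "norm (picard_op a b \<beta> \<alpha> f t) \<le> K * (t + norm \<beta> * norm (ray_int \<alpha> f t)
      + norm a * norm (ray_conv \<alpha> f f t) + norm b * norm (ray_conv \<alpha> (ray_conv \<alpha> f f) f t))"
    by (rule norm_picard_op_le[OF t resolvent_bound[OF t]])
  also have "\<dots> \<le> K * (t + norm \<beta> * (r * (2 * weight \<nu> t / \<nu>)) + norm a * (r * r * (8 * weight \<nu> t))
      + norm b * ((r * r * 8) * r * (8 * weight \<nu> t)))"
    by (intro mult_left_mono add_mono order_refl K_nonneg norm_ray_int_le_weight[OF assms nu_ge_4 t]
        norm_ray_conv_le_weight[OF assms assms t]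
        norm_ray_conv_le_weight[OF weight_bounded_ray_conv[OF assms assms] assms t]) auto
  also have "\<dots> = K * t + (K * norm \<beta> * (2 / \<nu>)) * (r * weight \<nu> t)
      + (K * (8 * norm a * r + 64 * norm b * r^2)) * (r * weight \<nu> t)"
    by (simp add: algebra_simps power2_eq_square)
  also have "\<dots> \<le> r / 2 * weight \<nu> t + 1/4 * (r * weight \<nu> t) + 1/4 * (r * weight \<nu> t)"
  proof (intro add_mono forcing_le t mult_right_mono linear_small)
    have "K * (8 * norm a * r + 64 * norm b * r^2) \<le> K * (16 * norm a * r + 192 * norm b * r^2)"
      using K_nonneg r_pos by (intro mult_left_mono add_mono) auto
    then show "K * (8 * norm a * r + 64 * norm b * r^2) \<le> 1/4" using nonlinear_small by simp
  qed (use r_pos wt in auto)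
  also have "\<dots> = r * weight \<nu> t" by simp
  finally show "norm (picard_op a b \<beta> \<alpha> f t) \<le> r * weight \<nu> t" .
qed

lemma picard_op_contraction:
  assumes [measurable]: "f \<in> borel_measurable borel" "g \<in> borel_measurable borel"
    and bf: "weight_bounded \<nu> f r" and bg: "weight_bounded \<nu> g r"
    and bd: "weight_bounded \<nu> (\<lambda>t. f t - g t) d"
  shows "weight_bounded \<nu> (\<lambda>t. picard_op a b \<beta> \<alpha> f t - picard_op a b \<beta> \<alpha> g t) (d / 2)"
  unfolding weight_bounded_def
proof (intro allI impI)
  fix t :: real assume t: "0 \<le> t"
  have wt: "0 < weight \<nu> t" using weight_pos[OF t] .
  have d0: "0 \<le> d" using weight_bounded_nonneg[OF bd] .
  have bC: "weight_bounded \<nu> (\<lambda>t. ray_conv \<alpha> f f t - ray_conv \<alpha> g g t) ((d * r + r * d) * 8)"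
    unfolding weight_bounded_def using norm_ray_conv_diff_le_weight[OF _ _ _ _ bf bf bg bg bd bd]
    by (simp add: mult_ac)
  have "norm (picard_op a b \<beta> \<alpha> f t - picard_op a b \<beta> \<alpha> g t)
      \<le> K * (norm \<beta> * norm (ray_int \<alpha> f t - ray_int \<alpha> g t) + norm a * norm (ray_conv \<alpha> f f t - ray_conv \<alpha> g g t)
           + norm b * norm (ray_conv \<alpha> (ray_conv \<alpha> f f) f t - ray_conv \<alpha> (ray_conv \<alpha> g g) g t))"
    by (rule norm_picard_op_diff_le[OF t resolvent_bound[OF t]])
  also have "\<dots> \<le> K * (norm \<beta> * (d * (2 * weight \<nu> t / \<nu>)) + norm a * ((d * r + r * d) * (8 * weight \<nu> t))
      + norm b * ((((d * r + r * d) * 8) * r + (r * r * 8) * d) * (8 * weight \<nu> t)))"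
    by (intro mult_left_mono add_mono K_nonneg norm_ray_int_diff_le_weight[OF _ _ bf bg bd nu_ge_4 t]
        norm_ray_conv_diff_le_weight[OF _ _ _ _ bf bf bg bg bd bd t]
        norm_ray_conv_diff_le_weight[OF _ _ _ _ weight_bounded_ray_conv[OF bf bf] bf
          weight_bounded_ray_conv[OF bg bg] bg bC bd t]) auto
  also have "\<dots> = (K * norm \<beta> * (2 / \<nu>)) * (d * weight \<nu> t)
      + (K * (16 * norm a * r + 192 * norm b * r^2)) * (d * weight \<nu> t)"
    by (simp add: algebra_simps power2_eq_square)
  also have "\<dots> \<le> 1/4 * (d * weight \<nu> t) + 1/4 * (d * weight \<nu> t)"
    by (intro add_mono mult_right_mono linear_small nonlinear_small) (use d0 wt in auto)
  also have "\<dots> = d / 2 * weight \<nu> t" by simp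
  finally show "norm (picard_op a b \<beta> \<alpha> f t - picard_op a b \<beta> \<alpha> g t) \<le> d / 2 * weight \<nu> t" .
qed

definition picard_iter :: "nat \<Rightarrow> real \<Rightarrow> complex" where
  "picard_iter n = (picard_op a b \<beta> \<alpha> ^^ n) (\<lambda>_. 0)"

lemma picard_iter_0: "picard_iter 0 = (\<lambda>_. 0)"
  and picard_iter_Suc: "picard_iter (Suc n) = picard_op a b \<beta> \<alpha> (picard_iter n)"
  unfolding picard_iter_def by auto

lemma borel_measurable_picard_iter [measurable]: "picard_iter n \<in> borel_measurable borel"
  by (induction n) (simp_all add: picard_iter_0 picard_iter_Suc)

lemma picard_iter_weight_bounded: "weight_bounded \<nu> (picard_iter n) r"
proof (induction n)
  case 0
  show ?case using r_pos weight_pos[of _ \<nu>] by (auto simp: picard_iter_0 weight_bounded_def less_imp_le)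
next
  case (Suc n)
  then show ?case unfolding picard_iter_Suc by (rule picard_op_weight_bounded)
qed

lemma picard_iter_neg: "t < 0 \<Longrightarrow> picard_iter n t = 0"
  by (cases n) (simp_all add: picard_iter_0 picard_iter_Suc picard_op_def)

lemma picard_iter_step: "weight_bounded \<nu> (\<lambda>t. picard_iter (Suc n) t - picard_iter n t) (r * (1/2)^n)"
proof (induction n)
  case 0
  then show ?case using picard_iter_weight_bounded[of 1] by (simp add: picard_iter_0)
next
  case (Suc n)
  have "weight_bounded \<nu> (\<lambda>t. picard_op a b \<beta> \<alpha> (picard_iter (Suc n)) t - picard_op a b \<beta> \<alpha> (picard_iter n) t)
      (r * (1/2)^n / 2)"
    by (intro picard_op_contraction picard_iter_weight_bounded Suc.IH) measurable
  then show ?case by (simp add: picard_iter_Suc[of "Suc n"] picard_iter_Suc[of n] mult_ac)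
qed

lemma picard_iter_cauchy:
  assumes "0 \<le> t"
  shows "norm (picard_iter (k + n) t - picard_iter n t) \<le> r * weight \<nu> t * (2 * (1/2)^n - 2 * (1/2)^(k + n))"
proof (induction k)
  case (Suc k)
  have "norm (picard_iter (Suc k + n) t - picard_iter n t)
      \<le> norm (picard_iter (Suc (k + n)) t - picard_iter (k + n) t) + norm (picard_iter (k + n) t - picard_iter n t)"
    by (rule order_trans[OF _ norm_triangle_ineq]) simp
  also have "\<dots> \<le> r * (1/2)^(k + n) * weight \<nu> t + r * weight \<nu> t * (2 * (1/2)^n - 2 * (1/2)^(k + n))"
    using picard_iter_step[of "k + n"] assms Suc.IH unfolding weight_bounded_def by (intro add_mono) auto
  also have "\<dots> = r * weight \<nu> t * (2 * (1/2)^n - 2 * (1/2)^(Suc k + n))"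
    by (simp add: algebra_simps)
  finally show ?case .
qed simp

definition picard_limit :: "real \<Rightarrow> complex" where
  "picard_limit t = lim (\<lambda>n. picard_iter n t)"

lemma picard_iter_tendsto: "(\<lambda>n. picard_iter n t) \<longlonglongrightarrow> picard_limit t"
proof -
  have "summable (\<lambda>k. picard_iter (Suc k) t - picard_iter k t)"
  proof (cases "0 \<le> t")
    case True
    show ?thesis
    proof (rule summable_comparison_test)
      show "\<exists>N. \<forall>n\<ge>N. norm (picard_iter (Suc n) t - picard_iter n t) \<le> r * weight \<nu> t * (1/2)^n"
        using picard_iter_step True unfolding weight_bounded_def by (auto simp: mult_ac)
      show "summable (\<lambda>n. r * weight \<nu> t * (1/2 :: real)^n)"
        by (intro summable_mult summable_geometric) auto
    qed
  qed (simp add: picard_iter_neg)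
  then have "(\<lambda>n. \<Sum>k<n. picard_iter (Suc k) t - picard_iter k t) \<longlonglongrightarrow> (\<Sum>k. picard_iter (Suc k) t - picard_iter k t)"
    by (rule summable_LIMSEQ)
  moreover have "(\<Sum>k<n. picard_iter (Suc k) t - picard_iter k t) = picard_iter n t" for n
    by (subst sum_lessThan_telescope) (simp add: picard_iter_0)
  ultimately have "convergent (\<lambda>n. picard_iter n t)" by (auto simp: convergent_def)
  then show ?thesis unfolding picard_limit_def by (rule convergent_LIMSEQ_iff[THEN iffD1])
qed

lemma borel_measurable_picard_limit [measurable]: "picard_limit \<in> borel_measurable borel"
  by (rule borel_measurable_LIMSEQ_metric[OF borel_measurable_picard_iter picard_iter_tendsto])

lemma picard_limit_neg: "t < 0 \<Longrightarrow> picard_limit t = 0"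
  using picard_iter_tendsto[of t] by (simp add: picard_iter_neg LIMSEQ_const_iff)

lemma picard_limit_weight_bounded: "weight_bounded \<nu> picard_limit r"
  unfolding weight_bounded_def
proof (intro allI impI)
  fix t :: real assume t: "0 \<le> t"
  show "norm (picard_limit t) \<le> r * weight \<nu> t"
    by (rule LIMSEQ_le_const2[OF tendsto_norm[OF picard_iter_tendsto]])
      (use picard_iter_weight_bounded t in \<open>auto simp: weight_bounded_def\<close>)
qed

lemma picard_limit_approx: "weight_bounded \<nu> (\<lambda>t. picard_limit t - picard_iter n t) (r * (2 * (1/2)^n))"
  unfolding weight_bounded_def
proof (intro allI impI)
  fix t :: real assume t: "0 \<le> t"
  have lim: "(\<lambda>k. norm (picard_iter (k + n) t - picard_iter n t)) \<longlonglongrightarrow> norm (picard_limit t - picard_iter n t)"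
    using LIMSEQ_ignore_initial_segment[OF picard_iter_tendsto[of t], of n]
    by (intro tendsto_norm tendsto_diff tendsto_const)
  have bound: "norm (picard_iter (k + n) t - picard_iter n t) \<le> r * (2 * (1/2)^n) * weight \<nu> t" for k
  proof -
    have "r * weight \<nu> t * (2 * (1/2)^n - 2 * (1/2)^(k + n)) \<le> r * weight \<nu> t * (2 * (1/2)^n)"
      using r_pos weight_pos[OF t, of \<nu>] by (intro mult_left_mono) auto
    then show ?thesis using picard_iter_cauchy[OF t, of k n] by (simp add: mult_ac)
  qed
  show "norm (picard_limit t - picard_iter n t) \<le> r * (2 * (1/2)^n) * weight \<nu> t"
    by (rule LIMSEQ_le_const2[OF lim]) (use bound in blast)
qed

lemma picard_limit_fixed: "picard_op a b \<beta> \<alpha> picard_limit t = picard_limit t"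
proof (cases "0 \<le> t")
  case t: True
  have bound: "norm (picard_iter (Suc n) t - picard_op a b \<beta> \<alpha> picard_limit t) \<le> r * weight \<nu> t * (1/2)^n"
    for n
  proof -
    have "weight_bounded \<nu> (\<lambda>t. picard_op a b \<beta> \<alpha> picard_limit t - picard_op a b \<beta> \<alpha> (picard_iter n) t)
        (r * (2 * (1/2)^n) / 2)"
      by (rule picard_op_contraction[OF borel_measurable_picard_limit borel_measurable_picard_iter
            picard_limit_weight_bounded picard_iter_weight_bounded picard_limit_approx])
    then have "norm (picard_op a b \<beta> \<alpha> picard_limit t - picard_iter (Suc n) t) \<le> r * (2 * (1/2)^n) / 2 * weight \<nu> t"
      using t unfolding weight_bounded_def by (simp add: picard_iter_Suc)
    then show ?thesis by (simp add: norm_minus_commute mult_ac)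
  qed
  have "(\<lambda>n. r * weight \<nu> t * (1/2 :: real)^n) \<longlonglongrightarrow> 0"
    by (intro tendsto_mult_right_zero LIMSEQ_power_zero) auto
  then have "(\<lambda>n. picard_iter (Suc n) t - picard_op a b \<beta> \<alpha> picard_limit t) \<longlonglongrightarrow> 0"
    by (rule Lim_null_comparison[OF always_eventually[OF allI[OF bound]]])
  from tendsto_add[OF this tendsto_const[of "picard_op a b \<beta> \<alpha> picard_limit t"]]
  have "(\<lambda>n. picard_iter (Suc n) t) \<longlonglongrightarrow> picard_op a b \<beta> \<alpha> picard_limit t"
    by simp
  moreover have "(\<lambda>n. picard_iter (Suc n) t) \<longlonglongrightarrow> picard_limit t"
    using picard_iter_tendsto by (rule LIMSEQ_Suc)
  ultimately show ?thesis by (rule LIMSEQ_unique)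
qed (simp add: picard_op_def picard_limit_neg)

end

lemma linear_le_weight:
  fixes K r \<nu> :: real
  assumes "0 \<le> K" "0 < r" "3 \<le> \<nu>" "6 * K / r \<le> \<nu>" "0 \<le> t"
  shows "K * t \<le> r / 2 * weight \<nu> t"
proof -
  define l where "l = \<nu> / 3"
  have l1: "1 \<le> l" and l2: "2 * K / r \<le> l" using assms unfolding l_def by (auto simp: field_simps)
  have "(1 + l * t) ^ 3 \<le> exp (l * t) ^ 3" using l1 assms(5) by (intro power_mono exp_ge_add_one_self) auto
  also have "\<dots> = exp (\<nu> * t)" unfolding l_def by (simp flip: exp_of_nat_mult)
  finally have e: "(1 + l * t) ^ 3 \<le> exp (\<nu> * t)" .
  have "t \<le> l * t" using mult_right_mono[OF l1 assms(5)] by simp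
  then have "(1 + t)^2 \<le> (1 + l * t)^2" using assms(5) by (intro power_mono) auto
  then have "(l * t) * (1 + t)^2 \<le> (1 + l * t) * (1 + l * t)^2"
    using l1 assms(5) by (intro mult_mono) auto
  also have "\<dots> = (1 + l * t) ^ 3" by (simp add: power2_eq_square power3_eq_cube)
  finally have "(l * t) * (1 + t)^2 \<le> exp (\<nu> * t)" using e by linarith
  moreover have "(2 * K / r) * t * (1 + t)^2 \<le> l * t * (1 + t)^2"
    using l2 assms(5) by (intro mult_right_mono) auto
  ultimately have "(2 * K / r) * t * (1 + t)^2 \<le> exp (\<nu> * t)" by linarith
  then have "K * t * (1 + t)^2 \<le> r / 2 * exp (\<nu> * t)" using assms(2) by (simp add: field_simps)
  then show ?thesis unfolding weight_def using assms(5) by (simp add: field_simps)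
qed

lemma picard_setting_exists:
  assumes K: "\<And>t. 0 \<le> t \<Longrightarrow> norm (1 / (1 - ray_point \<alpha> t)) \<le> K"
  shows "\<exists>\<nu> r. picard_setting a b \<beta> \<alpha> K \<nu> r"
proof -
  have K1: "1 \<le> K" using K[of 0] by (simp add: ray_point_def)
  define X where "X = 16 * norm a + 192 * norm b"
  define r where "r = 1 / (4 * K * X + 1)"
  define \<nu> where "\<nu> = max 4 (max (8 * K * norm \<beta>) (6 * K / r))"
  have X0: "0 \<le> X" unfolding X_def by simp
  have r0: "0 < r" and r1: "r \<le> 1" unfolding r_def using K1 X0 by (simp_all add: add_nonneg_pos)
  have "picard_setting a b \<beta> \<alpha> K \<nu> r"
  proof
    show "\<And>t. 0 \<le> t \<Longrightarrow> norm (1 / (1 - ray_point \<alpha> t)) \<le> K" by (rule K)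
    show "4 \<le> \<nu>" "0 < r" unfolding \<nu>_def using r0 by auto
    show "\<And>t. 0 \<le> t \<Longrightarrow> K * t \<le> r / 2 * weight \<nu> t"
      using K1 r0 by (intro linear_le_weight) (auto simp: \<nu>_def)
    show "K * norm \<beta> * (2 / \<nu>) \<le> 1/4"
      unfolding \<nu>_def by (simp add: field_simps)
    have "r^2 \<le> r" using r0 r1 by (simp add: power2_eq_square mult_le_cancel_left1)
    then have "16 * norm a * r + 192 * norm b * r^2 \<le> X * r"
      unfolding X_def using mult_left_mono[of "r^2" r "norm b"] by (simp add: algebra_simps)
    then have "K * (16 * norm a * r + 192 * norm b * r^2) \<le> (K * X) / (4 * (K * X) + 1)"
      using K1 mult_left_mono[of _ "X * r" K] by (simp add: r_def mult.assoc)
    also have "\<dots> \<le> 1/4"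
      using K1 X0 by (simp add: pos_divide_le_eq add_nonneg_pos)
    finally show "K * (16 * norm a * r + 192 * norm b * r^2) \<le> 1/4" .
  qed
  then show ?thesis by blast
qed

lemma L1nu_if_laplace_nn_finite:
  assumes [measurable]: "f \<in> borel_measurable borel" and "laplace_nn \<mu> (ennorm f) < \<infinity>"
  shows "f \<in> L1nu \<mu>"
  unfolding L1nu_def set_borel_measurable_def set_integrable_def
proof (intro CollectI conjI)
  show "(\<lambda>x. indicator {0..} x *\<^sub>R f x) \<in> borel_measurable lborel" by measurable
  show "integrable lborel (\<lambda>x. indicator {0..} x *\<^sub>R (norm (f x) * exp (- \<mu> * x)))"
  proof (rule integrableI_bounded)
    have "(\<integral>\<^sup>+x. ennreal (norm (indicator {0..} x *\<^sub>R (norm (f x) * exp (- \<mu> * x)))) \<partial>lborel)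
        = laplace_nn \<mu> (ennorm f)"
      unfolding laplace_nn_def by (intro nn_integral_cong) (auto simp: indicator_def ennreal_mult)
    then show "(\<integral>\<^sup>+x. ennreal (norm (indicator {0..} x *\<^sub>R (norm (f x) * exp (- \<mu> * x)))) \<partial>lborel) < \<infinity>"
      using assms(2) by simp
  qed measurable
qed

context picard_setting
begin

lemma picard_limit_L1nu: "picard_limit \<in> L1nu (\<nu> + 1)"
proof (rule L1nu_if_laplace_nn_finite)
  have "laplace_nn (\<nu> + 1) (ennorm picard_limit)
      \<le> (\<integral>\<^sup>+t. ennreal r * (indicator {0..} t * 1 * ennreal (exp (- 1 * t))) \<partial>lborel)"
    unfolding laplace_nn_def
  proof (intro nn_integral_mono)
    fix t :: real
    show "indicator {0..} t * ennorm picard_limit t * ennreal (exp (- (\<nu> + 1) * t))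
      \<le> ennreal r * (indicator {0..} t * 1 * ennreal (exp (- 1 * t)))"
    proof (cases "0 \<le> t")
      case True
      have "norm (picard_limit t) * exp (- (\<nu> + 1) * t) \<le> r * weight \<nu> t * exp (- (\<nu> + 1) * t)"
        using picard_limit_weight_bounded True unfolding weight_bounded_def by (intro mult_right_mono) auto
      also have "\<dots> = r * (exp (- t) / (1 + t)^2)"
        unfolding weight_def by (simp add: algebra_simps flip: exp_add)
      also have "\<dots> \<le> r * exp (- t)"
        using True r_pos by (intro mult_left_mono) (auto simp: field_simps)
      finally have "ennreal (norm (picard_limit t) * exp (- (\<nu> + 1) * t)) \<le> ennreal (r * exp (- t))"
        by (rule ennreal_leI)
      then show ?thesis using True r_pos by (simp add: ennreal_mult)
    qed simp
  qed
  also have "\<dots> = ennreal r * laplace_nn 1 (\<lambda>_. 1)"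
    unfolding laplace_nn_def by (rule nn_integral_cmult) measurable
  also have "\<dots> = ennreal r" using laplace_nn_const_one[of 1] by simp
  finally show "laplace_nn (\<nu> + 1) (ennorm picard_limit) < \<infinity>" by (simp add: order_le_less_trans)
qed measurable

lemma solves_eq_picard_limit: "solves_eq a b \<beta> \<alpha> picard_limit"
  unfolding solves_eq_iff_picard_op using picard_limit_fixed by simp

end

section \<open>Solutions in L1nu\<close>

text \<open>Membership in L1nu only makes the restriction to [0, \<infinity>) measurable, so uniqueness is proved
  for restrictions.\<close>

definition restrict_nonneg :: "(real \<Rightarrow> complex) \<Rightarrow> real \<Rightarrow> complex" where
  "restrict_nonneg f t = indicator {0..} t *\<^sub>R f t"

lemma restrict_nonneg_eq: "0 \<le> t \<Longrightarrow> restrict_nonneg f t = f t"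
  unfolding restrict_nonneg_def by simp

lemma L1nu_restrict_nonneg:
  assumes "f \<in> L1nu \<mu>"
  shows "restrict_nonneg f \<in> borel_measurable borel" "laplace_nn \<mu> (ennorm (restrict_nonneg f)) < \<infinity>"
proof -
  show "restrict_nonneg f \<in> borel_measurable borel"
    using assms unfolding L1nu_def set_borel_measurable_def restrict_nonneg_def[abs_def] by simp
  have "integrable lborel (\<lambda>x. indicator {0..} x *\<^sub>R (norm (f x) * exp (- \<mu> * x)))"
    using assms unfolding L1nu_def set_integrable_def by auto
  then have "(\<integral>\<^sup>+x. ennreal (norm (indicator {0..} x *\<^sub>R (norm (f x) * exp (- \<mu> * x)))) \<partial>lborel) < \<infinity>"
    unfolding integrable_iff_bounded by auto
  moreover have "(\<integral>\<^sup>+x. ennreal (norm (indicator {0..} x *\<^sub>R (norm (f x) * exp (- \<mu> * x)))) \<partial>lborel)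
      = laplace_nn \<mu> (ennorm (restrict_nonneg f))"
    unfolding laplace_nn_def restrict_nonneg_def
    by (intro nn_integral_cong) (auto simp: indicator_def ennreal_mult)
  ultimately show "laplace_nn \<mu> (ennorm (restrict_nonneg f)) < \<infinity>" by simp
qed

lemma ray_int_cong:
  "(\<And>u. 0 \<le> u \<Longrightarrow> u \<le> t \<Longrightarrow> f u = g u) \<Longrightarrow> ray_int \<alpha> f t = ray_int \<alpha> g t"
  unfolding ray_int_def by (subst set_lebesgue_integral_cong[where g=g]) auto

lemma ray_conv_cong:
  "(\<And>u. 0 \<le> u \<Longrightarrow> u \<le> t \<Longrightarrow> f u = f' u) \<Longrightarrow> (\<And>u. 0 \<le> u \<Longrightarrow> u \<le> t \<Longrightarrow> g u = g' u)
    \<Longrightarrow> ray_conv \<alpha> f g t = ray_conv \<alpha> f' g' t"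
  unfolding ray_conv_def by (subst set_lebesgue_integral_cong[where g="\<lambda>u. f' u * g' (t - u)"]) auto

lemma solves_eq_restrict_nonneg:
  assumes "solves_eq a b \<beta> \<alpha> f"
  shows "solves_eq a b \<beta> \<alpha> (restrict_nonneg f)"
proof -
  have conv: "ray_conv \<alpha> (restrict_nonneg f) (restrict_nonneg f) u = ray_conv \<alpha> f f u" if "0 \<le> u" for u
    by (rule ray_conv_cong) (auto simp: restrict_nonneg_eq)
  have "ray_int \<alpha> (restrict_nonneg f) t = ray_int \<alpha> f t"
    and "ray_conv \<alpha> (ray_conv \<alpha> (restrict_nonneg f) (restrict_nonneg f)) (restrict_nonneg f) t
      = ray_conv \<alpha> (ray_conv \<alpha> f f) f t" for t
    by (intro ray_int_cong ray_conv_cong; simp add: restrict_nonneg_eq conv)+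
  then show ?thesis
    using assms unfolding solves_eq_def by (auto elim!: AE_mp simp: restrict_nonneg_eq conv)
qed

lemma L1nu_solutions_unique:
  assumes "0 < \<alpha>" "\<alpha> < 2 * pi"
    and "f \<in> L1nu \<nu>" "g \<in> L1nu \<nu>'" "0 < \<nu>" "0 < \<nu>'"
    and "solves_eq a b \<beta> \<alpha> f" "solves_eq a b \<beta> \<alpha> g"
  shows "AE t in lborel. 0 \<le> t \<longrightarrow> g t = f t"
proof -
  obtain K where K: "\<And>t. 0 \<le> t \<Longrightarrow> norm (1 / (1 - ray_point \<alpha> t)) \<le> K"
    using resolvent_bounded_on_ray[OF assms(1,2)] by blast
  define \<mu> where "\<mu> = max \<nu> \<nu>'"
  have "laplace_nn \<mu> (ennorm (restrict_nonneg f)) < \<infinity>" "laplace_nn \<mu> (ennorm (restrict_nonneg g)) < \<infinity>"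
    using le_less_trans[OF laplace_nn_antimono L1nu_restrict_nonneg(2)[OF assms(3)]]
      le_less_trans[OF laplace_nn_antimono L1nu_restrict_nonneg(2)[OF assms(4)]]
    by (auto simp: \<mu>_def)
  then have "AE t in lborel. 0 \<le> t \<longrightarrow> restrict_nonneg g t = restrict_nonneg f t"
    using L1nu_restrict_nonneg(1) assms(3-8) K
    by (intro solutions_unique[where \<nu>=\<mu>] solves_eq_restrict_nonneg) (auto simp: \<mu>_def)
  then show ?thesis by eventually_elim (auto simp: restrict_nonneg_eq)
qed

theorem mainTheorem10:
  fixes a b \<beta> :: complex and \<alpha> :: real
  assumes "0 < \<alpha>" and "\<alpha> < 2 * pi"
  shows "\<exists>\<nu>0 > 0. \<exists>F. (\<exists>\<nu>\<ge>\<nu>0. F \<in> L1nu \<nu>) \<and> solves_eq a b \<beta> \<alpha> F \<and>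
           (\<forall>G. (\<exists>\<nu>\<ge>\<nu>0. G \<in> L1nu \<nu>) \<and> solves_eq a b \<beta> \<alpha> G \<longrightarrow>
                (AE t in lborel. t \<ge> 0 \<longrightarrow> G t = F t))"
proof -
  obtain K where "\<And>t. 0 \<le> t \<Longrightarrow> norm (1 / (1 - ray_point \<alpha> t)) \<le> K"
    using resolvent_bounded_on_ray[OF assms] by blast
  then obtain \<nu> r where "picard_setting a b \<beta> \<alpha> K \<nu> r"
    using picard_setting_exists by blast
  then interpret picard_setting a b \<beta> \<alpha> K \<nu> r .
  have "\<exists>\<nu>'\<ge>1. picard_limit \<in> L1nu \<nu>'"
    using picard_limit_L1nu nu_ge_4 by (intro exI[of _ "\<nu> + 1"]) auto
  moreover have "AE t in lborel. t \<ge> 0 \<longrightarrow> G t = picard_limit t"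
    if "\<exists>\<nu>'\<ge>1. G \<in> L1nu \<nu>'" "solves_eq a b \<beta> \<alpha> G" for G
    using that nu_ge_4
    by (auto intro!: L1nu_solutions_unique[OF assms picard_limit_L1nu] solves_eq_picard_limit)
  ultimately show ?thesis
    using solves_eq_picard_limit by (intro exI[of _ "1::real"]) auto
qed

end
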